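(* Let $\alpha\in\mathbb R$. There exists $\beta_0<0$ such that for every $\beta\in[\beta_0,0)$ and $\delta\in\big(0,e^{-1/\sqrt{|\beta|}}\big)$, $$\Big\|\beta U\sum_{r=1}^q\tilde V_r^2\Big\|_{L^{4/3}(\mathbb R^4)}+\Big\|\Delta\tilde V+\tilde V^3+\beta U^2\tilde V+\alpha\tilde V\sum_{r=2}^q\tilde V_r^2\Big\|_{L^{4/3}(\mathbb R^4)}=\mathcal O(|\beta|\delta),$$ i.e. the left-hand side is bounded by $C|\beta|\delta$ with $C$ independent of $\beta,\delta$.
   Context: Let $q\geq2$ and $k\geq2$ be integers. Let $U(x)=\frac{2\sqrt2}{1+|x|^2}$ on $\mathbb R^4$, $U_{\delta,\xi}(x)=\frac1\delta U(\frac{x-\xi}\delta)$. For $\delta\in(0,1)$ let $\rho=\sqrt{1-\delta^2}$, $\tilde\xi_\ell=\frac{\rho}{\sqrt2}\big(\cos\frac{2\pi(\ell-1)}k,\sin\frac{2\pi(\ell-1)}k,\cos\frac{2\pi(\ell-1)}k,\sin\frac{2\pi(\ell-1)}k\big)$, $\ell=1,\dots,k$, and $\tilde V=\sum_{\ell=1}^kU_{\delta,\tilde\xi_\ell}$. For $\theta\in\mathbb R$, $\mathscr T_\theta(x_1,x_2,x_3,x_4)=(x_1\cos\theta-x_2\sin\theta,\,x_1\sin\theta+x_2\cos\theta,\,x_3\cos\theta+x_4\sin\theta,\,-x_3\sin\theta+x_4\cos\theta)$, $\mathscr T_r=\mathscr T_{(r-1)\pi/q}$, and $\tilde V_r(x)=\tilde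 V(\mathscr T_rx)$ for $r=1,\dots,q$ (so $\tilde V_1=\tilde V$). *)

theory Defs
  imports "HOL-Analysis.Analysis"
begin

definition U :: "real^4 \<Rightarrow> real" where
  "U x = 2 * sqrt 2 / (1 + (norm x)^2)"

definition Ubub :: "real \<Rightarrow> real^4 \<Rightarrow> real^4 \<Rightarrow> real" where
  "Ubub \<delta> \<xi> x = (1 / \<delta>) * U ((1 / \<delta>) *\<^sub>R (x - \<xi>))"

definition xi_tilde :: "nat \<Rightarrow> real \<Rightarrow> nat \<Rightarrow> real^4" where
  "xi_tilde k \<delta> l =
    (let \<rho> = sqrt (1 - \<delta>^2); \<theta> = 2 * pi * (real l - 1) / real k in
     vector [\<rho> / sqrt 2 * cos \<theta>, \<rho> / sqrt 2 * sin \<theta>,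
             \<rho> / sqrt 2 * cos \<theta>, \<rho> / sqrt 2 * sin \<theta>])"

definition V_tilde :: "nat \<Rightarrow> real \<Rightarrow> real^4 \<Rightarrow> real" where
  "V_tilde k \<delta> x = (\<Sum>l=1..k. Ubub \<delta> (xi_tilde k \<delta> l) x)"

definition rotT :: "real \<Rightarrow> real^4 \<Rightarrow> real^4" where
  "rotT \<theta> x = vector [x$1 * cos \<theta> - x$2 * sin \<theta>, x$1 * sin \<theta> + x$2 * cos \<theta>,
                       x$3 * cos \<theta> + x$4 * sin \<theta>, - x$3 * sin \<theta> + x$4 * cos \<theta>]"

definition V_r :: "nat \<Rightarrow> nat \<Rightarrow> real \<Rightarrow> nat \<Rightarrow> real^4 \<Rightarrow> real" where
  "V_r q k \<delta> r x = V_tilde k \<delta> (rotT ((real r - 1) * pi / real q) x)"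

definition partial :: "4 \<Rightarrow> (real^4 \<Rightarrow> real) \<Rightarrow> real^4 \<Rightarrow> real" where
  "partial i f x = deriv (\<lambda>t. f (x + t *\<^sub>R axis i 1)) 0"

definition laplacian :: "(real^4 \<Rightarrow> real) \<Rightarrow> real^4 \<Rightarrow> real" where
  "laplacian f x = (\<Sum>i\<in>UNIV. partial i (partial i f) x)"

text \<open>L^p norm (for functions known to be in L^p) w.r.t. Lebesgue measure on R^4.\<close>
definition Lp_norm :: "real \<Rightarrow> (real^4 \<Rightarrow> real) \<Rightarrow> real" where
  "Lp_norm p f = (\<integral>x. \<bar>f x\<bar> powr p \<partial>lborel) powr (1 / p)"

definition in_Lp :: "real \<Rightarrow> (real^4 \<Rightarrow> real) \<Rightarrow> bool" where
  "in_Lp p f \<longleftrightarrow> f \<in> borel_measurable lborel \<and> integrable lborel (\<lambda>x. \<bar>f x\<bar> powr p)"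

end

theory Submission
  imports Defs "HOL-Real_Asymp.Real_Asymp"
begin

text \<open>
  For delta > 0 each bubble is w(x) = 2 sqrt 2 delta / (delta^2 + |x - xi|^2), and in dimension four it solves
  Delta w + w^3 = 0 exactly. Hence Delta V + V^3 = (sum w_l)^3 - sum w_l^3 consists of interaction terms only.
  The centres of V and those of V_r, r >= 2, stay at mutual distance at least sigma > 0 uniformly in delta, and
  two bubbles with centres that far apart satisfy w_a w_b <= C delta (w_a + w_b). Since delta < exp (-1 / sqrt |beta|)
  forces delta <= 2 |beta|, both error terms are pointwise bounded by C |beta| times sums of w^2 and U^2 w.
  Finally the L^(4/3) norms of w^2 and U^2 w are O(delta); the integrals over R^4 are bounded by products of
  one-dimensional integrals using (delta^2 + |v|^2)^(-4e) <= prod_i (delta^2 + v_i^2)^(-e).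
\<close>

section \<open>One-dimensional integrals\<close>

lemma has_real_derivative_add_powr:
  fixes d p x :: real
  assumes "d + x > 0" and "p \<noteq> 1"
  shows "((\<lambda>x. (d + x) powr (1 - p) / (1 - p)) has_real_derivative (d + x) powr (-p)) (at x)"
proof -
  have "((\<lambda>x. (d + x) powr (1 - p) / (1 - p)) has_real_derivative
          (1 - p) * (d + x) powr (1 - p - 1) * (0 + 1) / (1 - p)) (at x)"
    using assms by (intro derivative_eq_intros DERIV_powr) auto
  moreover have "(1 - p) * (d + x) powr (1 - p - 1) * (0 + 1) / (1 - p) = (d + x) powr (-p)"
    using assms by simp
  ultimately show ?thesis
    by simp
qed

lemma nn_integral_add_powr_atLeast_0:
  fixes d p :: real
  assumes d: "d > 0" and p: "p > 1"
  shows "(\<integral>\<^sup>+x. ennreal ((d + x) powr (-p)) * indicator {0..} x \<partial>lborel) = ennreal (d powr (1 - p) / (p - 1))"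
proof -
  have "(\<integral>\<^sup>+x. ennreal ((d + x) powr (-p)) * indicator {0..} x \<partial>lborel)
        = 0 - (d + 0) powr (1 - p) / (1 - p)"
  proof (rule nn_integral_FTC_atLeast)
    have "((\<lambda>x. (d + x) powr (1 - p)) \<longlongrightarrow> 0) at_top" using p by real_asymp
    then show "((\<lambda>x. (d + x) powr (1 - p) / (1 - p)) \<longlongrightarrow> 0) at_top"
      by (intro tendsto_divide_zero)
  qed (use d p in \<open>auto intro!: has_real_derivative_add_powr\<close>)
  then show ?thesis
    by (simp add: minus_divide_right)
qed

lemma nn_integral_add_powr_Icc_0:
  fixes d p L :: real
  assumes d: "d > 0" and p: "p < 1" and L: "0 \<le> L"
  shows "(\<integral>\<^sup>+x. ennreal ((d + x) powr (-p)) * indicator {0..L} x \<partial>lborel)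
           = ennreal (((d + L) powr (1 - p) - d powr (1 - p)) / (1 - p))"
proof -
  have "(\<integral>\<^sup>+x. ennreal ((d + x) powr (-p)) * indicator {0..L} x \<partial>lborel)
        = (d + L) powr (1 - p) / (1 - p) - (d + 0) powr (1 - p) / (1 - p)"
    using d p L by (intro nn_integral_FTC_Icc has_real_derivative_add_powr) auto
  then show ?thesis
    by (simp add: diff_divide_distrib)
qed

lemma nn_integral_abs_shift_le:
  fixes h :: "real \<Rightarrow> real" and a :: real
  assumes [measurable]: "h \<in> borel_measurable borel"
  shows "(\<integral>\<^sup>+t. ennreal (h \<bar>t - a\<bar>) \<partial>lborel) \<le> 2 * (\<integral>\<^sup>+x. ennreal (h x) * indicator {0..} x \<partial>lborel)"
proof -
  let ?f = "\<lambda>x. ennreal (h x) * indicator {0..} x"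
  have "(\<integral>\<^sup>+t. ennreal (h \<bar>t - a\<bar>) \<partial>lborel) = (\<integral>\<^sup>+t. ennreal (h \<bar>t\<bar>) \<partial>lborel)"
    using nn_integral_real_affine[of "\<lambda>t. ennreal (h \<bar>t - a\<bar>)" 1 a] by simp
  also have "\<dots> \<le> (\<integral>\<^sup>+x. ?f x + ?f (0 + (-1) * x) \<partial>lborel)"
    by (intro nn_integral_mono) (auto split: split_indicator)
  also have "\<dots> = (\<integral>\<^sup>+x. ?f x \<partial>lborel) + (\<integral>\<^sup>+x. ?f (0 + (-1) * x) \<partial>lborel)"
    by (intro nn_integral_add) auto
  also have "(\<integral>\<^sup>+x. ?f (0 + (-1) * x) \<partial>lborel) = (\<integral>\<^sup>+x. ?f x \<partial>lborel)"
    using nn_integral_real_affine[of ?f "-1" 0] by simp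
  finally show ?thesis by (simp add: mult_2)
qed

lemma add_square_powr_le:
  fixes d s p :: real
  assumes d: "d > 0" and p: "p \<ge> 0"
  shows "(d^2 + s^2) powr (-p) \<le> 2 powr p * (d + \<bar>s\<bar>) powr (-2*p)"
proof -
  have pos: "d^2 + s^2 > 0" "d + \<bar>s\<bar> > 0" using d by (auto intro: add_pos_nonneg)
  have "(d + \<bar>s\<bar>)^2 \<le> 2 * (d^2 + s^2)"
    using zero_le_power2[of "d - \<bar>s\<bar>"] by (simp add: power2_eq_square algebra_simps)
  then have "((d + \<bar>s\<bar>)^2) powr p \<le> 2 powr p * (d^2 + s^2) powr p"
    using p by (metis powr_mono2 powr_mult zero_le_power2)
  then have "(d + \<bar>s\<bar>) powr (2*p) \<le> 2 powr p * (d^2 + s^2) powr p"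
    using pos by (simp add: powr_mult powr_powr flip: powr_numeral)
  then show ?thesis
    using pos by (simp add: powr_minus divide_simps mult.commute)
qed

lemma nn_integral_lorentzian_le:
  fixes d a p :: real
  assumes d: "d > 0" and p: "p > 1/2"
  shows "(\<integral>\<^sup>+t. ennreal ((d^2 + (t - a)^2) powr (-p)) \<partial>lborel)
           \<le> ennreal (2 * 2 powr p / (2*p - 1) * d powr (1 - 2*p))"
proof -
  let ?h = "\<lambda>x. 2 powr p * (d + x) powr (-2*p)"
  have "(\<integral>\<^sup>+t. ennreal ((d^2 + (t - a)^2) powr (-p)) \<partial>lborel) \<le> (\<integral>\<^sup>+t. ennreal (?h \<bar>t - a\<bar>) \<partial>lborel)"
    using add_square_powr_le[OF d] p by (intro nn_integral_mono ennreal_leI) auto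
  also have "\<dots> \<le> 2 * (\<integral>\<^sup>+x. ennreal (?h x) * indicator {0..} x \<partial>lborel)"
    by (rule nn_integral_abs_shift_le) measurable
  also have "(\<integral>\<^sup>+x. ennreal (?h x) * indicator {0..} x \<partial>lborel)
      = ennreal (2 powr p) * (\<integral>\<^sup>+x. ennreal ((d + x) powr (-(2*p))) * indicator {0..} x \<partial>lborel)"
    by (subst nn_integral_cmult[symmetric]) (auto simp: ennreal_mult mult_ac)
  also have "\<dots> = ennreal (2 powr p * (d powr (1 - 2*p) / (2*p - 1)))"
    using nn_integral_add_powr_atLeast_0[OF d, of "2*p"] p by (simp flip: ennreal_mult')
  finally show ?thesis
    using p by (simp add: numeral_mult_ennreal mult.assoc)
qed

lemma nn_integral_lorentzian_Icc_le:
  fixes d a p L :: real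
  assumes d: "0 < d" "d \<le> 1" and p: "0 < p" "p < 1/2" and L: "L \<ge> 0"
  shows "(\<integral>\<^sup>+t. ennreal ((d^2 + (t - a)^2) powr (-p) * indicator {a-L..a+L} t) \<partial>lborel)
           \<le> ennreal (2 * 2 powr p / (1 - 2*p) * (1 + L) powr (1 - 2*p))"
proof -
  let ?h = "\<lambda>x. 2 powr p * (d + x) powr (-2*p) * indicator {..L} x"
  have "(\<integral>\<^sup>+t. ennreal ((d^2 + (t - a)^2) powr (-p) * indicator {a-L..a+L} t) \<partial>lborel)
        \<le> (\<integral>\<^sup>+t. ennreal (?h \<bar>t - a\<bar>) \<partial>lborel)"
    using add_square_powr_le[OF d(1)] p
    by (intro nn_integral_mono ennreal_leI) (auto simp: indicator_def abs_le_iff)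
  also have "\<dots> \<le> 2 * (\<integral>\<^sup>+x. ennreal (?h x) * indicator {0..} x \<partial>lborel)"
    by (rule nn_integral_abs_shift_le) measurable
  also have "(\<integral>\<^sup>+x. ennreal (?h x) * indicator {0..} x \<partial>lborel)
      = ennreal (2 powr p) * (\<integral>\<^sup>+x. ennreal ((d + x) powr (-(2*p))) * indicator {0..L} x \<partial>lborel)"
    by (subst nn_integral_cmult[symmetric]) (auto intro!: nn_integral_cong simp: ennreal_mult indicator_def)
  also have "\<dots> = ennreal (2 powr p * (((d + L) powr (1 - 2*p) - d powr (1 - 2*p)) / (1 - 2*p)))"
    using nn_integral_add_powr_Icc_0[OF d(1), of "2*p" L] p L by (simp flip: ennreal_mult')
  also have "2 * \<dots> \<le> ennreal (2 * 2 powr p / (1 - 2*p) * (1 + L) powr (1 - 2*p))"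
  proof -
    have "(d + L) powr (1 - 2*p) \<le> (1 + L) powr (1 - 2*p)"
      using d p L by (intro powr_mono2) auto
    then have "(d + L) powr (1 - 2*p) - d powr (1 - 2*p) \<le> (1 + L) powr (1 - 2*p)"
      using powr_ge_zero[of d "1 - 2*p"] by linarith
    then have "ennreal (2 * (2 powr p * (((d + L) powr (1 - 2*p) - d powr (1 - 2*p)) / (1 - 2*p))))
        \<le> ennreal (2 * 2 powr p / (1 - 2*p) * (1 + L) powr (1 - 2*p))"
      using p by (intro ennreal_leI) (simp add: divide_right_mono)
    then show ?thesis
      by (subst (asm) ennreal_mult') auto
  qed
  finally show ?thesis .
qed

section \<open>Integrals over R^n by products over the basis\<close>

lemma powr_add_norm_le_prod_Basis:
  fixes v :: "'a::euclidean_space" and d e :: real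
  assumes d: "d > 0" and e: "e \<ge> 0"
  shows "(d^2 + (norm v)^2) powr (- (DIM('a) * e)) \<le> (\<Prod>b\<in>Basis. (d^2 + (v \<bullet> b)^2) powr (- e))"
proof -
  have pos: "d^2 + (norm v)^2 \<noteq> 0" using d by (simp add: add_pos_nonneg)
  have "(d^2 + (norm v)^2) powr (- (DIM('a) * e)) = (\<Prod>b\<in>(Basis::'a set). (d^2 + (norm v)^2) powr (- e))"
    using powr_power[of "d^2 + (norm v)^2" "- e" "DIM('a)"] pos by (simp add: mult.commute)
  also have "\<dots> \<le> (\<Prod>b\<in>Basis. (d^2 + (v \<bullet> b)^2) powr (- e))"
  proof (rule prod_mono)
    fix b :: 'a assume b: "b \<in> Basis"
    have "(v \<bullet> b)^2 \<le> (norm v)^2"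
      using power_mono[of "norm (v \<bullet> b)" "norm v" 2] norm_nth_le[OF b, of v] by simp
    then show "0 \<le> (d^2 + (norm v)^2) powr (- e) \<and> (d^2 + (norm v)^2) powr (- e) \<le> (d^2 + (v \<bullet> b)^2) powr (- e)"
      using d e by (auto intro!: powr_mono2' add_pos_nonneg)
  qed
  finally show ?thesis .
qed

lemma nn_integral_prod_Basis_le:
  fixes h :: "'a::euclidean_space \<Rightarrow> real \<Rightarrow> real" and B :: real
  assumes meas: "\<And>b. b \<in> Basis \<Longrightarrow> h b \<in> borel_measurable borel"
    and nonneg: "\<And>b t. b \<in> Basis \<Longrightarrow> 0 \<le> h b t"
    and bound: "\<And>b. b \<in> Basis \<Longrightarrow> (\<integral>\<^sup>+t. ennreal (h b t) \<partial>lborel) \<le> ennreal B"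
    and B: "B \<ge> 0"
  shows "(\<integral>\<^sup>+x. ennreal (\<Prod>b\<in>Basis. h b (x \<bullet> b)) \<partial>lborel) \<le> ennreal (B ^ DIM('a))"
proof -
  have "(\<integral>\<^sup>+x. ennreal (\<Prod>b\<in>Basis. h b (x \<bullet> b)) \<partial>lborel)
      = (\<integral>\<^sup>+x. (\<Prod>b\<in>Basis. ennreal (h b (x \<bullet> b))) \<partial>lborel)"
    using nonneg by (intro nn_integral_cong) (simp add: prod_ennreal)
  also have "\<dots> = (\<Prod>b\<in>Basis. (\<integral>\<^sup>+t. ennreal (h b t) \<partial>lborel))"
    using meas nonneg by (intro nn_integral_lborel_prod) auto
  also have "\<dots> \<le> (\<Prod>b\<in>(Basis::'a set). ennreal B)"
    by (rule prod_mono_ennreal) (rule bound)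
  also have "\<dots> = ennreal (B ^ DIM('a))"
    using B by (simp add: ennreal_power)
  finally show ?thesis .
qed

lemma nn_integral_lorentzian_euclidean_le:
  fixes c :: "'a::euclidean_space" and d e :: real
  assumes d: "d > 0" and e: "e > 1/2"
  shows "(\<integral>\<^sup>+x. ennreal ((d^2 + (norm (x - c))^2) powr (- (DIM('a) * e))) \<partial>lborel)
           \<le> ennreal ((2 * 2 powr e / (2*e - 1) * d powr (1 - 2*e)) ^ DIM('a))"
proof -
  have "(\<integral>\<^sup>+x. ennreal ((d^2 + (norm (x - c))^2) powr (- (DIM('a) * e))) \<partial>lborel)
      \<le> (\<integral>\<^sup>+x. ennreal (\<Prod>b\<in>Basis. (d^2 + (x \<bullet> b - c \<bullet> b)^2) powr (- e)) \<partial>lborel)"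
  proof (intro nn_integral_mono ennreal_leI)
    fix x
    show "(d^2 + (norm (x - c))^2) powr (- (DIM('a) * e)) \<le> (\<Prod>b\<in>Basis. (d^2 + (x \<bullet> b - c \<bullet> b)^2) powr (- e))"
      using powr_add_norm_le_prod_Basis[OF d, of e "x - c"] e by (simp add: inner_diff_left)
  qed
  also have "\<dots> \<le> ennreal ((2 * 2 powr e / (2*e - 1) * d powr (1 - 2*e)) ^ DIM('a))"
    using nn_integral_lorentzian_le[OF d e] e
    by (intro nn_integral_prod_Basis_le[where h = "\<lambda>b t. (d^2 + (t - c \<bullet> b)^2) powr (- e)"]) auto
  finally show ?thesis .
qed

lemma cball_in_sets_borel [measurable]: "cball c r \<in> sets borel"
  by (simp add: borel_closed)

lemma nn_integral_lorentzian_cball_le: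
  fixes c :: "'a::euclidean_space" and d e L :: real
  assumes d: "0 < d" "d \<le> 1" and e: "0 < e" "e < 1/2" and L: "L \<ge> 0"
  shows "(\<integral>\<^sup>+x. ennreal ((d^2 + (norm (x - c))^2) powr (- (DIM('a) * e)) * indicator (cball c L) x) \<partial>lborel)
           \<le> ennreal ((2 * 2 powr e / (1 - 2*e) * (1 + L) powr (1 - 2*e)) ^ DIM('a))"
proof -
  let ?h = "\<lambda>b t. (d^2 + (t - c \<bullet> b)^2) powr (- e) * indicator {c \<bullet> b - L..c \<bullet> b + L} t"
  have "(d^2 + (norm (x - c))^2) powr (- (DIM('a) * e)) * indicator (cball c L) x
          \<le> (\<Prod>b\<in>Basis. ?h b (x \<bullet> b))" for x
  proof (cases "x \<in> cball c L")
    case True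
    have "indicator {c \<bullet> b - L..c \<bullet> b + L} (x \<bullet> b) = (1::real)" if b: "b \<in> Basis" for b
    proof -
      have "\<bar>(x - c) \<bullet> b\<bar> \<le> L"
        using norm_nth_le[OF b, of "x - c"] True by (simp add: dist_norm norm_minus_commute)
      then show ?thesis
        by (auto simp: indicator_def inner_diff_left abs_le_iff)
    qed
    then have "?h b (x \<bullet> b) = (d^2 + ((x - c) \<bullet> b)^2) powr (- e)" if "b \<in> Basis" for b
      using that by (simp add: inner_diff_left)
    then show ?thesis
      using True powr_add_norm_le_prod_Basis[OF d(1), of e "x - c"] e by simp
  qed (simp add: prod_nonneg)
  then have "(\<integral>\<^sup>+x. ennreal ((d^2 + (norm (x - c))^2) powr (- (DIM('a) * e)) * indicator (cball c L) x) \<partial>lborel)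
      \<le> (\<integral>\<^sup>+x. ennreal (\<Prod>b\<in>Basis. ?h b (x \<bullet> b)) \<partial>lborel)"
    by (intro nn_integral_mono ennreal_leI)
  also have "\<dots> \<le> ennreal ((2 * 2 powr e / (1 - 2*e) * (1 + L) powr (1 - 2*e)) ^ DIM('a))"
    using nn_integral_lorentzian_Icc_le[OF d e L] e
    by (intro nn_integral_prod_Basis_le) auto
  finally show ?thesis .
qed

definition nn_Lp_integral :: "real \<Rightarrow> ('a::euclidean_space \<Rightarrow> real) \<Rightarrow> ennreal" where
  "nn_Lp_integral p f = (\<integral>\<^sup>+x. ennreal (\<bar>f x\<bar> powr p) \<partial>lborel)"

lemma sum_powr_le:
  fixes g :: "'a \<Rightarrow> real" and p :: real
  assumes fin: "finite S" and nonneg: "\<And>j. j \<in> S \<Longrightarrow> 0 \<le> g j" and p: "p > 0"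
  shows "(\<Sum>j\<in>S. g j) powr p \<le> real (card S) powr p * (\<Sum>j\<in>S. g j powr p)"
proof (cases "S = {}")
  case False
  obtain j0 where j0: "j0 \<in> S" "\<And>j. j \<in> S \<Longrightarrow> g j \<le> g j0"
    using Max_in[of "g ` S"] Max_ge[of "g ` S"] fin False by (metis finite_imageI image_eqI image_is_empty imageE)
  have "(\<Sum>j\<in>S. g j) \<le> real (card S) * g j0"
    using sum_mono[of S g "\<lambda>_. g j0"] j0 by simp
  then have "(\<Sum>j\<in>S. g j) powr p \<le> (real (card S) * g j0) powr p"
    using nonneg p by (intro powr_mono2) (auto simp: sum_nonneg)
  also have "\<dots> = real (card S) powr p * g j0 powr p"
    using nonneg j0 by (simp add: powr_mult)
  also have "\<dots> \<le> real (card S) powr p * (\<Sum>j\<in>S. g j powr p)"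
    using fin j0(1) by (intro mult_left_mono member_le_sum) auto
  finally show ?thesis .
qed simp

lemma abs_add_powr_le:
  fixes x y p :: real
  assumes p: "p \<ge> 0"
  shows "\<bar>x + y\<bar> powr p \<le> 2 powr p * (\<bar>x\<bar> powr p + \<bar>y\<bar> powr p)"
proof -
  have "\<bar>x + y\<bar> powr p \<le> (2 * max \<bar>x\<bar> \<bar>y\<bar>) powr p"
    using p by (intro powr_mono2) auto
  also have "\<dots> = 2 powr p * max \<bar>x\<bar> \<bar>y\<bar> powr p"
    using powr_mult[of 2 "max \<bar>x\<bar> \<bar>y\<bar>" p] by simp
  also have "max \<bar>x\<bar> \<bar>y\<bar> powr p \<le> \<bar>x\<bar> powr p + \<bar>y\<bar> powr p"
    by (simp add: max_def)
  finally show ?thesis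
    by simp
qed

lemma nn_Lp_integral_mono:
  assumes "\<And>x. \<bar>f x\<bar> \<le> \<bar>g x\<bar>" and "p \<ge> 0"
  shows "nn_Lp_integral p f \<le> nn_Lp_integral p g"
  unfolding nn_Lp_integral_def using assms by (intro nn_integral_mono ennreal_leI powr_mono2) auto

lemma nn_Lp_integral_cmult_le:
  assumes [measurable]: "f \<in> borel_measurable borel"
    and "nn_Lp_integral p f \<le> ennreal M" and "M \<ge> 0" and "p \<ge> 0"
  shows "nn_Lp_integral p (\<lambda>x. c * f x) \<le> ennreal (\<bar>c\<bar> powr p * M)"
proof -
  have "nn_Lp_integral p (\<lambda>x. c * f x) = (\<integral>\<^sup>+x. ennreal (\<bar>c\<bar> powr p) * ennreal (\<bar>f x\<bar> powr p) \<partial>lborel)"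
    unfolding nn_Lp_integral_def by (simp add: abs_mult powr_mult ennreal_mult)
  also have "\<dots> = ennreal (\<bar>c\<bar> powr p) * nn_Lp_integral p f"
    unfolding nn_Lp_integral_def by (intro nn_integral_cmult) measurable
  also have "\<dots> \<le> ennreal (\<bar>c\<bar> powr p) * ennreal M"
    using assms(2) by (rule mult_left_mono) simp
  finally show ?thesis
    using assms(3) by (simp add: ennreal_mult)
qed

lemma nn_Lp_integral_sum_le:
  fixes f :: "'i \<Rightarrow> 'a::euclidean_space \<Rightarrow> real"
  assumes fin: "finite S" and meas: "\<And>j. j \<in> S \<Longrightarrow> f j \<in> borel_measurable borel"
    and bound: "\<And>j. j \<in> S \<Longrightarrow> nn_Lp_integral p (f j) \<le> ennreal M"
    and M: "M \<ge> 0" and p: "p > 0"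
  shows "nn_Lp_integral p (\<lambda>x. \<Sum>j\<in>S. f j x) \<le> ennreal (real (card S) powr p * (real (card S) * M))"
proof -
  define c where "c = real (card S) powr p"
  have pointwise: "ennreal (\<bar>\<Sum>j\<in>S. f j x\<bar> powr p) \<le> ennreal c * ennreal (\<Sum>j\<in>S. \<bar>f j x\<bar> powr p)" for x
  proof -
    have "\<bar>\<Sum>j\<in>S. f j x\<bar> powr p \<le> (\<Sum>j\<in>S. \<bar>f j x\<bar>) powr p"
      using p by (intro powr_mono2) auto
    also have "\<dots> \<le> c * (\<Sum>j\<in>S. \<bar>f j x\<bar> powr p)"
      unfolding c_def using fin p by (intro sum_powr_le) auto
    finally show ?thesis
      by (simp add: c_def ennreal_leI flip: ennreal_mult')
  qed
  have meas_powr: "(\<lambda>x. ennreal (\<bar>f j x\<bar> powr p)) \<in> borel_measurable borel" if "j \<in> S" for j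
    using meas[OF that] by measurable
  have "nn_Lp_integral p (\<lambda>x. \<Sum>j\<in>S. f j x) \<le> (\<integral>\<^sup>+x. ennreal c * ennreal (\<Sum>j\<in>S. \<bar>f j x\<bar> powr p) \<partial>lborel)"
    unfolding nn_Lp_integral_def by (intro nn_integral_mono pointwise)
  also have "\<dots> = ennreal c * (\<integral>\<^sup>+x. (\<Sum>j\<in>S. ennreal (\<bar>f j x\<bar> powr p)) \<partial>lborel)"
    using meas_powr by (subst nn_integral_cmult) (auto intro!: borel_measurable_sum)
  also have "\<dots> = ennreal c * (\<Sum>j\<in>S. nn_Lp_integral p (f j))"
    unfolding nn_Lp_integral_def using meas_powr by (subst nn_integral_sum) auto
  also have "\<dots> \<le> ennreal c * (\<Sum>j\<in>S. ennreal M)"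
    using bound by (intro mult_left_mono sum_mono) auto
  also have "\<dots> = ennreal (c * (real (card S) * M))"
    using M by (simp add: c_def ennreal_mult ennreal_of_nat_eq_real_of_nat)
  finally show ?thesis
    unfolding c_def .
qed

lemma nn_Lp_integral_add_le:
  assumes meas: "f \<in> borel_measurable borel" "g \<in> borel_measurable borel"
    and bound: "nn_Lp_integral p f \<le> ennreal a" "nn_Lp_integral p g \<le> ennreal b"
    and a: "a \<ge> 0" and b: "b \<ge> 0" and p: "p \<ge> 0"
  shows "nn_Lp_integral p (\<lambda>x. f x + g x) \<le> ennreal (2 powr p * (a + b))"
proof -
  have "nn_Lp_integral p (\<lambda>x. f x + g x)
      \<le> (\<integral>\<^sup>+x. ennreal (2 powr p) * (ennreal (\<bar>f x\<bar> powr p) + ennreal (\<bar>g x\<bar> powr p)) \<partial>lborel)"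
    unfolding nn_Lp_integral_def using abs_add_powr_le[OF p]
    by (intro nn_integral_mono) (simp add: ennreal_leI flip: ennreal_plus ennreal_mult)
  also have "\<dots> = ennreal (2 powr p) * (nn_Lp_integral p f + nn_Lp_integral p g)"
    unfolding nn_Lp_integral_def using meas by (simp add: nn_integral_cmult nn_integral_add)
  also have "\<dots> \<le> ennreal (2 powr p) * (ennreal a + ennreal b)"
    using bound by (intro mult_left_mono add_mono) auto
  finally show ?thesis
    using a b by (simp add: ennreal_mult)
qed

lemma nn_integral_linear_le:
  fixes f g :: "'a::euclidean_space \<Rightarrow> real"
  assumes [measurable]: "f \<in> borel_measurable borel" "g \<in> borel_measurable borel"
    and nonneg: "\<And>x. 0 \<le> f x" "\<And>x. 0 \<le> g x" "a \<ge> 0" "b \<ge> 0" "F \<ge> 0" "G \<ge> 0"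
    and bound: "(\<integral>\<^sup>+x. ennreal (f x) \<partial>lborel) \<le> ennreal F" "(\<integral>\<^sup>+x. ennreal (g x) \<partial>lborel) \<le> ennreal G"
  shows "(\<integral>\<^sup>+x. ennreal (a * f x + b * g x) \<partial>lborel) \<le> ennreal (a * F + b * G)"
proof -
  have "(\<integral>\<^sup>+x. ennreal (a * f x + b * g x) \<partial>lborel)
      = ennreal a * (\<integral>\<^sup>+x. ennreal (f x) \<partial>lborel) + ennreal b * (\<integral>\<^sup>+x. ennreal (g x) \<partial>lborel)"
    using nonneg by (simp add: ennreal_mult nn_integral_add nn_integral_cmult)
  also have "\<dots> \<le> ennreal a * ennreal F + ennreal b * ennreal G"
    using bound by (intro add_mono mult_left_mono) auto
  also have "\<dots> = ennreal (a * F + b * G)"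
    using nonneg by (simp add: ennreal_mult)
  finally show ?thesis .
qed

lemma in_Lp_Lp_norm_le:
  fixes F :: "real^4 \<Rightarrow> real"
  assumes meas: "F \<in> borel_measurable borel" and bound: "nn_Lp_integral p F \<le> ennreal B"
    and B: "B \<ge> 0" and p: "p > 0"
  shows "in_Lp p F" and "Lp_norm p F \<le> B powr (1 / p)"
proof -
  have int: "integrable lborel (\<lambda>x. \<bar>F x\<bar> powr p)"
  proof (rule integrableI_bounded)
    show "(\<integral>\<^sup>+x. ennreal (norm (\<bar>F x\<bar> powr p)) \<partial>lborel) < \<infinity>"
      using bound by (simp add: nn_Lp_integral_def le_less_trans)
  qed (use meas in measurable)
  then show "in_Lp p F"
    unfolding in_Lp_def using meas by simp
  have "ennreal (\<integral>x. \<bar>F x\<bar> powr p \<partial>lborel) = nn_Lp_integral p F"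
    unfolding nn_Lp_integral_def by (rule nn_integral_eq_integral[OF int, symmetric]) simp
  then have "(\<integral>x. \<bar>F x\<bar> powr p \<partial>lborel) \<le> B"
    using bound B by (metis ennreal_le_iff)
  then show "Lp_norm p F \<le> B powr (1 / p)"
    unfolding Lp_norm_def using p by (simp add: powr_mono2 integral_nonneg_AE)
qed

lemma in_Lp_Lp_norm_le_of_dominated:
  fixes F G :: "real^4 \<Rightarrow> real"
  assumes meas: "F \<in> borel_measurable borel" "G \<in> borel_measurable borel"
    and dom: "\<And>x. \<bar>F x\<bar> \<le> c * G x" and c: "c \<ge> 0"
    and bound: "nn_Lp_integral p G \<le> ennreal (X * t powr p)" and X: "X \<ge> 0" and t: "t \<ge> 0" and p: "p > 0"
  shows "in_Lp p F \<and> Lp_norm p F \<le> X powr (1 / p) * (c * t)"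
proof -
  have "nn_Lp_integral p F \<le> nn_Lp_integral p (\<lambda>x. c * G x)"
    using dom p by (intro nn_Lp_integral_mono) (auto intro: order_trans[OF _ abs_ge_self])
  also have "\<dots> \<le> ennreal (\<bar>c\<bar> powr p * (X * t powr p))"
    using meas bound X p by (intro nn_Lp_integral_cmult_le) auto
  also have "\<bar>c\<bar> powr p * (X * t powr p) = X * (c * t) powr p"
    using c t by (simp add: powr_mult)
  finally have Q: "nn_Lp_integral p F \<le> ennreal (X * (c * t) powr p)" .
  have "(X * (c * t) powr p) powr (1 / p) = X powr (1 / p) * (c * t)"
    using X c t p by (simp add: powr_mult powr_powr)
  then show ?thesis
    using in_Lp_Lp_norm_le[OF meas(1) Q _ p] X by simp
qed

section \<open>Bubbles\<close>

definition bubble :: "real \<Rightarrow> real^4 \<Rightarrow> real^4 \<Rightarrow> real" where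
  "bubble d c x = 2 * sqrt 2 * d / (d^2 + (norm (x - c))^2)"

lemma Ubub_eq_bubble: "d > 0 \<Longrightarrow> Ubub d c x = bubble d c x"
proof -
  assume d: "d > 0"
  have n: "norm ((1/d) *\<^sub>R (x - c)) = norm (x - c) / d" using d by simp
  have D: "d^2 + (norm (x - c))^2 > 0" using d by (simp add: add_pos_nonneg)
  show ?thesis unfolding Ubub_def U_def bubble_def n using d D
    by (simp add: field_simps power2_eq_square)
qed

lemma U_eq_bubble: "U = bubble 1 0"
  unfolding U_def bubble_def by auto

lemma bubble_pos: "d > 0 \<Longrightarrow> bubble d c x > 0"
  unfolding bubble_def by (auto intro!: divide_pos_pos add_pos_nonneg)

lemma bubble_le_of_dist:
  assumes "d > 0" and "r > 0" and "r \<le> (norm (x - c))^2"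
  shows "bubble d c x \<le> 2 * sqrt 2 * d / r"
  unfolding bubble_def using assms
  by (intro divide_left_mono) (auto intro!: mult_pos_pos add_pos_nonneg simp: add_increasing)

lemma bubble_le: "d > 0 \<Longrightarrow> bubble d c x \<le> 2 * sqrt 2 / d"
  unfolding bubble_def by (simp add: divide_simps power2_eq_square add_pos_nonneg mult_left_mono)

lemma U_pos: "U x > 0"
  by (simp add: U_eq_bubble bubble_pos)

lemma U_le: "U x \<le> 2 * sqrt 2"
  using bubble_le[of 1 0 x] by (simp add: U_eq_bubble)

lemma borel_measurable_bubble [measurable]: "bubble d c \<in> borel_measurable borel"
  unfolding bubble_def by measurable

lemma borel_measurable_U [measurable]: "U \<in> borel_measurable borel"
  unfolding U_eq_bubble by measurable

lemma bubble_powr_eq: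
  assumes d: "d > 0"
  shows "bubble d c x powr a = (2 * sqrt 2 * d) powr a * (d^2 + (norm (x - c))^2) powr (- a)"
proof -
  have "d^2 + (norm (x - c))^2 > 0"
    using d by (simp add: add_pos_nonneg)
  then show ?thesis
    unfolding bubble_def using d by (subst powr_divide) (simp_all add: powr_minus divide_inverse)
qed

lemma power2_norm_vec: "(norm (v::real^'n))^2 = (\<Sum>i\<in>UNIV. (v$i)^2)"
  unfolding power2_norm_eq_inner inner_vec_def by (simp add: power2_eq_square)

lemma norm_add_scaleR_axis_sq:
  fixes v :: "real^4"
  shows "(norm (v + t *\<^sub>R axis i 1))^2 = (norm v)^2 + 2 * t * v$i + t^2"
proof -
  have "(norm (v + t *\<^sub>R axis i 1))^2 = (v + t *\<^sub>R axis i 1) \<bullet> (v + t *\<^sub>R axis i 1)"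
    by (simp add: power2_norm_eq_inner)
  also have "\<dots> = v \<bullet> v + 2 * t * (v \<bullet> axis i 1) + t^2 * (axis i 1 \<bullet> axis i (1::real))"
    by (simp add: inner_commute power2_eq_square algebra_simps)
  finally show ?thesis by (simp add: inner_axis power2_norm_eq_inner)
qed

definition bubble_deriv :: "real \<Rightarrow> real^4 \<Rightarrow> 4 \<Rightarrow> real^4 \<Rightarrow> real" where
  "bubble_deriv d c i x = - 4 * sqrt 2 * d * (x - c)$i / (d^2 + (norm (x - c))^2)^2"

definition bubble_deriv2 :: "real \<Rightarrow> real^4 \<Rightarrow> 4 \<Rightarrow> real^4 \<Rightarrow> real" where
  "bubble_deriv2 d c i x =
     - 4 * sqrt 2 * d * (d^2 + (norm (x - c))^2 - 4 * ((x - c)$i)^2) / (d^2 + (norm (x - c))^2)^3"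

lemma has_real_derivative_bubble_axis:
  assumes d: "d > 0"
  shows "((\<lambda>t. bubble d c (x + t *\<^sub>R axis i 1)) has_real_derivative bubble_deriv d c i x) (at 0)"
proof -
  define N where "N = (norm (x - c))^2"
  define w where "w = (x - c)$i"
  have D: "d^2 + N > 0" unfolding N_def using d by (simp add: add_pos_nonneg)
  have "bubble d c (x + t *\<^sub>R axis i 1) = 2 * sqrt 2 * d / (d^2 + (N + 2 * t * w + t^2))" for t
  proof -
    have "x + t *\<^sub>R axis i 1 - c = (x - c) + t *\<^sub>R axis i 1"
      by simp
    then show ?thesis
      unfolding bubble_def N_def w_def by (simp only: norm_add_scaleR_axis_sq)
  qed
  moreover have "((\<lambda>t. 2 * sqrt 2 * d / (d^2 + (N + 2 * t * w + t^2))) has_real_derivative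
        - (2 * sqrt 2 * d * (2 * w)) / (d^2 + N)^2) (at 0)"
    using D by (auto intro!: derivative_eq_intros simp: power2_eq_square)
  moreover have "- (2 * sqrt 2 * d * (2 * w)) / (d^2 + N)^2 = bubble_deriv d c i x"
    unfolding bubble_deriv_def N_def w_def by simp
  ultimately show ?thesis
    by simp
qed

lemma has_real_derivative_bubble_deriv_axis:
  assumes d: "d > 0"
  shows "((\<lambda>t. bubble_deriv d c i (y + t *\<^sub>R axis i 1)) has_real_derivative bubble_deriv2 d c i y) (at 0)"
proof -
  define N where "N = (norm (y - c))^2"
  define w where "w = (y - c)$i"
  have D: "d^2 + N > 0" unfolding N_def using d by (simp add: add_pos_nonneg)
  have f: "(\<lambda>t. bubble_deriv d c i (y + t *\<^sub>R axis i 1)) = (\<lambda>t. - 4 * sqrt 2 * d * (w + t) / (d^2 + (N + 2 * t * w + t^2))^2)"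
  proof
    fix t
    have e: "y + t *\<^sub>R axis i 1 - c = (y - c) + t *\<^sub>R axis i 1" by simp
    have "(y + t *\<^sub>R axis i 1 - c)$i = w + t" unfolding e w_def by (simp add: axis_def)
    then show "bubble_deriv d c i (y + t *\<^sub>R axis i 1) = - 4 * sqrt 2 * d * (w + t) / (d^2 + (N + 2 * t * w + t^2))^2"
      unfolding bubble_deriv_def N_def w_def e by (simp only: norm_add_scaleR_axis_sq)
  qed
  have "((\<lambda>t. - 4 * sqrt 2 * d * (w + t) / (d^2 + (N + 2 * t * w + t^2))^2) has_real_derivative
        (- 4 * sqrt 2 * d * 1 * (d^2 + N)^2 - (- 4 * sqrt 2 * d * w) * (2 * (d^2 + N) * (2 * w))) / ((d^2 + N)^2)^2) (at 0)"
    using D apply (auto intro!: derivative_eq_intros simp: power2_eq_square)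
    by (simp add: divide_simps)
  moreover have "(- 4 * sqrt 2 * d * 1 * (d^2 + N)^2 - (- 4 * sqrt 2 * d * w) * (2 * (d^2 + N) * (2 * w))) / ((d^2 + N)^2)^2
      = bubble_deriv2 d c i y"
  proof -
    define E where "E = d^2 + N"
    have E0: "E \<noteq> 0" using D unfolding E_def by simp
    have num: "- 4 * sqrt 2 * d * 1 * E^2 - (- 4 * sqrt 2 * d * w) * (2 * E * (2 * w)) = E * (- 4 * sqrt 2 * d * (E - 4 * w^2))"
      by (simp add: algebra_simps power2_eq_square)
    have den: "(E^2)^2 = E * E^3" by (simp add: power2_eq_square power3_eq_cube)
    have "(- 4 * sqrt 2 * d * 1 * E^2 - (- 4 * sqrt 2 * d * w) * (2 * E * (2 * w))) / (E^2)^2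
        = (- 4 * sqrt 2 * d * (E - 4 * w^2)) / E^3"
      unfolding num den using E0 by simp
    then show ?thesis unfolding bubble_deriv2_def E_def N_def w_def by simp
  qed
  ultimately show ?thesis unfolding f by simp
qed

text \<open>Summed over the four coordinates, the terms 4 ((x - c)_i)^2 give 4 |x - c|^2 and only 4 d^2 is left:
  this cancellation in dimension four makes the bubble an exact solution of Delta w + w^3 = 0.\<close>
lemma sum_bubble_deriv2:
  assumes d: "d > 0"
  shows "(\<Sum>i\<in>UNIV. bubble_deriv2 d c i x) = - ((bubble d c x)^3)"
proof -
  define N where "N = (norm (x - c))^2"
  define E where "E = d^2 + N"
  have E0: "E > 0" unfolding E_def N_def using d by (simp add: add_pos_nonneg)
  have "(\<Sum>i\<in>UNIV. bubble_deriv2 d c i x) = (\<Sum>i\<in>UNIV. (- 4 * sqrt 2 * d) * (E - 4 * ((x - c)$i)^2) / E^3)"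
    unfolding bubble_deriv2_def E_def N_def by (simp add: mult.assoc)
  also have "\<dots> = (- 4 * sqrt 2 * d) * (\<Sum>i\<in>UNIV. (E - 4 * ((x - c)$i)^2)) / E^3"
    by (simp add: sum_divide_distrib sum_distrib_left sum_negf)
  also have "(\<Sum>i\<in>(UNIV::4 set). (E - 4 * ((x - c)$i)^2)) = 4 * E - 4 * N"
    unfolding N_def power2_norm_vec by (simp add: sum_subtractf sum_distrib_left[symmetric])
  also have "4 * E - 4 * N = 4 * d^2" unfolding E_def by simp
  finally have L: "(\<Sum>i\<in>UNIV. bubble_deriv2 d c i x) = - 16 * sqrt 2 * d^3 / E^3"
    by (simp add: power2_eq_square power3_eq_cube)
  have s3: "sqrt 2 ^ 3 = 2 * sqrt (2::real)" by (simp add: power3_eq_cube)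
  have "(bubble d c x)^3 = (2 * sqrt 2 * d)^3 / E^3" unfolding bubble_def E_def N_def by (simp add: power_divide)
  also have "(2 * sqrt 2 * d)^3 = 16 * sqrt 2 * d^3" by (simp add: power_mult_distrib s3)
  finally show ?thesis using L by simp
qed

lemma laplacian_sum_bubble:
  fixes cs :: "'i \<Rightarrow> real^4" and L :: "'i set"
  assumes d: "d > 0"
  shows "laplacian (\<lambda>x. \<Sum>l\<in>L. bubble d (cs l) x) x = - (\<Sum>l\<in>L. (bubble d (cs l) x)^3)"
proof -
  have first: "partial i (\<lambda>x. \<Sum>l\<in>L. bubble d (cs l) x) = (\<lambda>y. \<Sum>l\<in>L. bubble_deriv d (cs l) i y)" for i
    unfolding partial_def
    by (intro ext DERIV_imp_deriv DERIV_sum has_real_derivative_bubble_axis[OF d])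
  have "partial i (partial i (\<lambda>x. \<Sum>l\<in>L. bubble d (cs l) x)) x = (\<Sum>l\<in>L. bubble_deriv2 d (cs l) i x)" for i
    unfolding first partial_def
    by (intro DERIV_imp_deriv DERIV_sum has_real_derivative_bubble_deriv_axis[OF d])
  then have "laplacian (\<lambda>x. \<Sum>l\<in>L. bubble d (cs l) x) x = (\<Sum>l\<in>L. \<Sum>i\<in>UNIV. bubble_deriv2 d (cs l) i x)"
    unfolding laplacian_def by (simp add: sum.swap[of _ UNIV])
  also have "\<dots> = - (\<Sum>l\<in>L. (bubble d (cs l) x)^3)"
    using sum_bubble_deriv2[OF d] by (simp add: sum_negf)
  finally show ?thesis .
qed

section \<open>The rotations and the centres\<close>

lemma vector4_nth [simp]:
  "(vector [a, b, c, d] :: real^4) $ 1 = a" "(vector [a, b, c, d] :: real^4) $ 2 = b"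
  "(vector [a, b, c, d] :: real^4) $ 3 = c" "(vector [a, b, c, d] :: real^4) $ 4 = d"
  by (simp_all add: vector_def)

lemma vec4_eq_iff: "(v::real^4) = w \<longleftrightarrow> v$1 = w$1 \<and> v$2 = w$2 \<and> v$3 = w$3 \<and> v$4 = w$4"
  by (simp add: vec_eq_iff forall_4)

lemma rotT_nth:
  "rotT t x $ 1 = x$1 * cos t - x$2 * sin t" "rotT t x $ 2 = x$1 * sin t + x$2 * cos t"
  "rotT t x $ 3 = x$3 * cos t + x$4 * sin t" "rotT t x $ 4 = - x$3 * sin t + x$4 * cos t"
  by (simp_all add: rotT_def)

lemma rotT_diff: "rotT t (x - y) = rotT t x - rotT t y"
  by (simp add: vec4_eq_iff rotT_nth algebra_simps)

lemma rotT_scaleR: "rotT t (a *\<^sub>R x) = a *\<^sub>R rotT t x"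
  by (simp add: vec4_eq_iff rotT_nth algebra_simps)

lemma rotation_identities:
  fixes a b c s :: real
  shows "(a * c + b * s) * c - (- a * s + b * c) * s = a * (s^2 + c^2)"
    and "(a * c + b * s) * s + (- a * s + b * c) * c = b * (s^2 + c^2)"
    and "(a * c - b * s) * c + (a * s + b * c) * s = a * (s^2 + c^2)"
    and "- (a * c - b * s) * s + (a * s + b * c) * c = b * (s^2 + c^2)"
    and "(a * c - b * s)^2 + (a * s + b * c)^2 = (a^2 + b^2) * (s^2 + c^2)"
    and "(a * c + b * s)^2 + (- a * s + b * c)^2 = (a^2 + b^2) * (s^2 + c^2)"
  by (simp_all add: algebra_simps power2_eq_square)

lemma rotT_rotT_uminus: "rotT t (rotT (- t) y) = y"
  using rotation_identities[of "y$1" "cos t" "y$2" "sin t"] rotation_identities[of "y$3" "cos t" "y$4" "sin t"]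
  by (simp add: vec4_eq_iff rotT_nth)

lemma norm_rotT: "norm (rotT t x) = norm x"
proof -
  have "(norm (rotT t x))^2 = (norm x)^2"
    using rotation_identities[of "x$1" "cos t" "x$2" "sin t"] rotation_identities[of "x$3" "cos t" "x$4" "sin t"]
    unfolding power2_norm_vec sum_4 rotT_nth by simp
  then show ?thesis
    by simp
qed

lemma norm_rotT_diff: "norm (rotT t x - rotT t y) = norm (x - y)"
  by (metis rotT_diff norm_rotT)

lemma bubble_rotT: "bubble d (rotT t c) (rotT t x) = bubble d c x"
  unfolding bubble_def by (simp add: norm_rotT_diff)

definition xi_direction :: "nat \<Rightarrow> nat \<Rightarrow> real^4" where
  "xi_direction k l = (let \<phi> = 2 * pi * (real l - 1) / real k in vector [cos \<phi>, sin \<phi>, cos \<phi>, sin \<phi>])"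

definition T_angle :: "nat \<Rightarrow> nat \<Rightarrow> real" where
  "T_angle q r = (real r - 1) * pi / real q"

definition V_r_centre :: "nat \<Rightarrow> nat \<Rightarrow> real \<Rightarrow> nat \<Rightarrow> nat \<Rightarrow> real^4" where
  "V_r_centre q k d r l = rotT (- T_angle q r) (xi_tilde k d l)"

lemma xi_tilde_eq_scaleR: "xi_tilde k d l = (sqrt (1 - d^2) / sqrt 2) *\<^sub>R xi_direction k l"
  by (simp add: vec4_eq_iff xi_tilde_def xi_direction_def Let_def)

lemma norm_xi_tilde_le:
  assumes "0 \<le> d" "d \<le> 1"
  shows "norm (xi_tilde k d l) \<le> 1"
proof -
  have "(norm (xi_direction k l))^2 = 2"
    unfolding power2_norm_vec sum_4 xi_direction_def Let_def by simp
  then have "norm (xi_direction k l) = sqrt 2"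
    by (metis norm_ge_zero real_sqrt_unique)
  moreover have "0 \<le> 1 - d^2" "1 - d^2 \<le> 1"
    using assms by (auto simp: power_le_one)
  ultimately show ?thesis
    unfolding xi_tilde_eq_scaleR by simp
qed

lemma V_tilde_eq_sum_bubble: "d > 0 \<Longrightarrow> V_tilde k d = (\<lambda>x. \<Sum>l=1..k. bubble d (xi_tilde k d l) x)"
  unfolding V_tilde_def by (simp add: Ubub_eq_bubble)

lemma V_r_eq_sum_bubble:
  assumes "d > 0"
  shows "V_r q k d r x = (\<Sum>l=1..k. bubble d (V_r_centre q k d r l) x)"
proof -
  have "xi_tilde k d l = rotT (T_angle q r) (V_r_centre q k d r l)" for l
    unfolding V_r_centre_def by (simp add: rotT_rotT_uminus)
  then show ?thesis
    using assms unfolding V_r_def V_tilde_eq_sum_bubble[OF assms] T_angle_def[symmetric]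
    by (metis bubble_rotT)
qed

lemma xi_direction_inj:
  assumes a: "a \<in> {1..k}" and b: "b \<in> {1..k}" and eq: "xi_direction k a = xi_direction k b"
  shows "a = b"
proof -
  define \<phi> where "\<phi> l = 2 * pi * (real l - 1) / real k" for l
  have k: "real k > 0" using a by simp
  have "sin (\<phi> a) = sin (\<phi> b) \<and> cos (\<phi> a) = cos (\<phi> b)"
    using eq unfolding vec4_eq_iff xi_direction_def Let_def \<phi>_def by simp
  then obtain n :: int where "\<phi> a = \<phi> b + 2 * pi * n"
    using sin_cos_eq_iff by blast
  then have "2 * pi * (real a - real b) = 2 * pi * (real_of_int n * real k)"
    unfolding \<phi>_def using k by (simp add: field_simps)
  then have e: "real a - real b = real_of_int n * real k"
    by simp
  have "\<bar>real a - real b\<bar> < real k"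
    using a b by auto
  then have "\<bar>real_of_int n\<bar> * real k < 1 * real k"
    unfolding e by (simp add: abs_mult)
  then have "n = 0"
    using k by (simp only: mult_less_cancel_right) linarith
  then show ?thesis
    using e by simp
qed

text \<open>T_r maps the circle of centres into itself only for r = 1: it shifts the angle by
  +theta in the (x1,x2)-plane and by -theta in the (x3,x4)-plane, and the centres have equal angles in both.\<close>
lemma rotT_xi_direction_neq:
  assumes r: "r \<in> {2..q}"
  shows "rotT (T_angle q r) (xi_direction k a) \<noteq> xi_direction k l"
proof
  assume eq: "rotT (T_angle q r) (xi_direction k a) = xi_direction k l"
  define t where "t = T_angle q r"
  define u where "u = 2 * pi * (real a - 1) / real k"
  define v where "v = 2 * pi * (real l - 1) / real k"
  have c: "rotT t (xi_direction k a) $ i = xi_direction k l $ i" for i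
    using eq unfolding t_def by simp
  have "sin (u + t) = sin v \<and> cos (u + t) = cos v"
    using c[of 1] c[of 2] unfolding rotT_nth xi_direction_def Let_def u_def v_def
    by (simp add: sin_add cos_add algebra_simps)
  then obtain n1 :: int where n1: "u + t = v + 2 * pi * n1"
    using sin_cos_eq_iff by blast
  have "sin (u - t) = sin v \<and> cos (u - t) = cos v"
    using c[of 3] c[of 4] unfolding rotT_nth xi_direction_def Let_def u_def v_def
    by (simp add: sin_diff cos_diff algebra_simps)
  then obtain n2 :: int where n2: "u - t = v + 2 * pi * n2"
    using sin_cos_eq_iff by blast
  have "t = pi * (n1 - n2)"
    using n1 n2 by (simp add: algebra_simps)
  moreover have q: "real q > 0"
    using r by simp
  ultimately have "pi * (real r - 1) = pi * (real_of_int (n1 - n2) * real q)"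
    unfolding t_def T_angle_def by (simp add: field_simps)
  then have "real r - 1 = real_of_int (n1 - n2) * real q"
    by simp
  then have e: "(real r - 1) / real q = real_of_int (n1 - n2)"
    using q by (simp add: field_simps)
  have "0 < (real r - 1) / real q" "(real r - 1) / real q < 1"
    using r q by (simp_all add: divide_less_eq)
  then have "0 < n1 - n2" "n1 - n2 < 1"
    unfolding e by simp_all
  then show False
    by linarith
qed

lemma finite_pos_lower_bound:
  fixes f :: "'a \<Rightarrow> real"
  assumes "finite A" and "\<forall>x\<in>A. f x > 0"
  shows "\<exists>m>0. \<forall>x\<in>A. m \<le> f x"
  using assms by (intro exI[of _ "Min (insert 1 (f ` A))"]) auto

lemma xi_tilde_scale_ge_half:
  assumes "0 \<le> d" "d \<le> 1/2"
  shows "1/2 \<le> sqrt (1 - d^2) / sqrt 2"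
proof -
  have "d^2 \<le> (1/2)^2"
    using assms by (intro power_mono) auto
  then have "sqrt (1/4) \<le> sqrt ((1 - d^2) / 2)"
    by (intro real_sqrt_le_mono) (simp add: power2_eq_square)
  then show ?thesis
    by (simp add: real_sqrt_divide)
qed

lemma norm_xi_tilde_diff:
  assumes "0 \<le> d" "d \<le> 1"
  shows "norm (xi_tilde k d a - xi_tilde k d b) = sqrt (1 - d^2) / sqrt 2 * norm (xi_direction k a - xi_direction k b)"
proof -
  have "0 \<le> 1 - d^2"
    using assms by (simp add: power_le_one)
  then show ?thesis
    unfolding xi_tilde_eq_scaleR by (simp flip: scaleR_diff_right)
qed

lemma norm_xi_tilde_diff_V_r_centre:
  assumes "0 \<le> d" "d \<le> 1"
  shows "norm (xi_tilde k d a - V_r_centre q k d r l)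
           = sqrt (1 - d^2) / sqrt 2 * norm (rotT (T_angle q r) (xi_direction k a) - xi_direction k l)"
proof -
  have "norm (xi_tilde k d a - V_r_centre q k d r l)
      = norm (rotT (T_angle q r) (xi_tilde k d a) - rotT (T_angle q r) (V_r_centre q k d r l))"
    by (rule norm_rotT_diff[symmetric])
  also have "rotT (T_angle q r) (V_r_centre q k d r l) = xi_tilde k d l"
    unfolding V_r_centre_def by (rule rotT_rotT_uminus)
  also have "0 \<le> 1 - d^2"
    using assms by (simp add: power_le_one)
  then have "norm (rotT (T_angle q r) (xi_tilde k d a) - xi_tilde k d l)
      = sqrt (1 - d^2) / sqrt 2 * norm (rotT (T_angle q r) (xi_direction k a) - xi_direction k l)"
    unfolding xi_tilde_eq_scaleR rotT_scaleR by (simp flip: scaleR_diff_right)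
  finally show ?thesis .
qed

text \<open>For 0 <= delta <= 1/2 the centres are the fixed points xi_direction k l scaled by a factor at least 1/2,
  so their mutual distances are bounded below independently of delta.\<close>
lemma centres_separated:
  obtains \<sigma> :: real where "\<sigma> > 0"
    and "\<And>d a b. 0 \<le> d \<Longrightarrow> d \<le> 1/2 \<Longrightarrow> a \<in> {1..k} \<Longrightarrow> b \<in> {1..k} \<Longrightarrow> a \<noteq> b \<Longrightarrow>
           \<sigma> \<le> norm (xi_tilde k d a - xi_tilde k d b)"
    and "\<And>d r a l. 0 \<le> d \<Longrightarrow> d \<le> 1/2 \<Longrightarrow> r \<in> {2..q} \<Longrightarrow> a \<in> {1..k} \<Longrightarrow> l \<in> {1..k} \<Longrightarrow>
           \<sigma> \<le> norm (xi_tilde k d a - V_r_centre q k d r l)"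
proof -
  let ?P = "xi_direction k"
  have "\<exists>m>0. \<forall>p\<in>{p \<in> {1..k} \<times> {1..k}. fst p \<noteq> snd p}. m \<le> norm (?P (fst p) - ?P (snd p))"
    by (rule finite_pos_lower_bound) (auto, metis atLeastAtMost_iff One_nat_def xi_direction_inj)
  then obtain m1 where m1: "m1 > 0"
    and m1_le: "\<And>a b. a \<in> {1..k} \<Longrightarrow> b \<in> {1..k} \<Longrightarrow> a \<noteq> b \<Longrightarrow> m1 \<le> norm (?P a - ?P b)"
    by force
  have "\<exists>m>0. \<forall>p\<in>{2..q} \<times> {1..k} \<times> {1..k}.
          m \<le> norm (rotT (T_angle q (fst p)) (?P (fst (snd p))) - ?P (snd (snd p)))"
    by (rule finite_pos_lower_bound) (auto dest: rotT_xi_direction_neq)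
  then obtain m2 where m2: "m2 > 0"
    and m2_le: "\<And>r a l. r \<in> {2..q} \<Longrightarrow> a \<in> {1..k} \<Longrightarrow> l \<in> {1..k} \<Longrightarrow>
                  m2 \<le> norm (rotT (T_angle q r) (?P a) - ?P l)"
    by force
  have half: "min m1 m2 / 2 \<le> sqrt (1 - d^2) / sqrt 2 * y"
    if "0 \<le> d" "d \<le> 1/2" "min m1 m2 \<le> y" for d y
  proof -
    have "1/2 * y \<le> sqrt (1 - d^2) / sqrt 2 * y"
      using xi_tilde_scale_ge_half[OF that(1,2)] that(3) m1 m2 by (intro mult_right_mono) auto
    then show ?thesis
      using that(3) by linarith
  qed
  show ?thesis
  proof
    show "min m1 m2 / 2 > 0"
      using m1 m2 by simp
    show "min m1 m2 / 2 \<le> norm (xi_tilde k d a - xi_tilde k d b)"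
      if d: "0 \<le> d" "d \<le> 1/2" and "a \<in> {1..k}" "b \<in> {1..k}" "a \<noteq> b" for d a b
      using half[OF d] m1_le[OF that(3-5)] norm_xi_tilde_diff[of d k a b] d by simp
    show "min m1 m2 / 2 \<le> norm (xi_tilde k d a - V_r_centre q k d r l)"
      if d: "0 \<le> d" "d \<le> 1/2" and "r \<in> {2..q}" "a \<in> {1..k}" "l \<in> {1..k}" for d r a l
      using half[OF d] m2_le[OF that(3-5)] norm_xi_tilde_diff_V_r_centre[of d k a q r l] d by simp
  qed
qed

section \<open>Interaction of separated bubbles\<close>

text \<open>Two bubbles with distant centres interact weakly: at every point one of the two
  centres is at distance at least sigma/2, where that bubble is O(d).\<close>
lemma bubble_mult_le_of_separated:
  assumes d: "d > 0" and \<sigma>: "\<sigma> > 0" and sep: "\<sigma> \<le> norm (c1 - c2)" and e: "8 * sqrt 2 * d / \<sigma>^2 \<le> e"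
  shows "bubble d c1 x * bubble d c2 x \<le> e * (bubble d c1 x + bubble d c2 x)"
proof -
  have b1: "bubble d c1 x > 0" and b2: "bubble d c2 x > 0"
    using bubble_pos[OF d] by auto
  have "0 \<le> 8 * sqrt 2 * d / \<sigma>^2"
    using d by simp
  then have e0: "e \<ge> 0"
    using e by linarith
  have far: "bubble d c x \<le> e" if "\<sigma>/2 \<le> norm (x - c)" for c
  proof -
    have "(\<sigma>/2)^2 \<le> (norm (x - c))^2"
      using that \<sigma> by (intro power_mono) auto
    then have "bubble d c x \<le> 2 * sqrt 2 * d / (\<sigma>/2)^2"
      using \<sigma> by (intro bubble_le_of_dist[OF d]) auto
    also have "\<dots> = 8 * sqrt 2 * d / \<sigma>^2"
      by (simp add: power2_eq_square field_simps)
    finally show ?thesis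
      using e by linarith
  qed
  have "norm (c1 - c2) \<le> norm (x - c1) + norm (x - c2)"
    by (metis dist_norm dist_triangle2 dist_commute)
  then consider "\<sigma>/2 \<le> norm (x - c1)" | "\<sigma>/2 \<le> norm (x - c2)"
    using sep by linarith
  then have "bubble d c1 x * bubble d c2 x \<le> e * bubble d c2 x \<or> bubble d c1 x * bubble d c2 x \<le> e * bubble d c1 x"
    by cases (use far b1 b2 in \<open>auto intro: mult_right_mono mult_left_mono simp: mult.commute\<close>)
  then show ?thesis
    using b1 b2 e0 by (auto simp: distrib_left add_increasing add_increasing2)
qed

lemma mult_sum_le_of_pairwise:
  fixes v :: "'a \<Rightarrow> real"
  assumes "\<And>b. b \<in> B \<Longrightarrow> x * v b \<le> e * (x + v b)"
  shows "x * (\<Sum>b\<in>B. v b) \<le> e * (real (card B) * x + (\<Sum>b\<in>B. v b))"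
proof -
  have "x * (\<Sum>b\<in>B. v b) = (\<Sum>b\<in>B. x * v b)"
    by (simp add: sum_distrib_left)
  also have "\<dots> \<le> (\<Sum>b\<in>B. e * (x + v b))"
    using assms by (intro sum_mono) auto
  also have "\<dots> = e * (real (card B) * x + (\<Sum>b\<in>B. v b))"
    by (simp add: sum.distrib sum_distrib_left[symmetric])
  finally show ?thesis .
qed

lemma cube_sum_minus_sum_cube_eq:
  fixes u :: "'a \<Rightarrow> real"
  shows "(\<Sum>a\<in>L. u a)^3 - (\<Sum>a\<in>L. (u a)^3)
           = (\<Sum>a\<in>L. u a * ((\<Sum>b\<in>L. u b) - u a) * ((\<Sum>b\<in>L. u b) + u a))"
proof -
  define S where "S = (\<Sum>a\<in>L. u a)"
  have "(\<Sum>a\<in>L. u a * (S - u a) * (S + u a)) = (\<Sum>a\<in>L. u a * S^2 - (u a)^3)"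
    by (intro sum.cong) (simp_all add: algebra_simps power2_eq_square power3_eq_cube)
  also have "\<dots> = S^3 - (\<Sum>a\<in>L. (u a)^3)"
    by (simp add: sum_subtractf sum_distrib_right[symmetric] S_def power2_eq_square power3_eq_cube)
  finally show ?thesis
    unfolding S_def by simp
qed

lemma sum_cube_le_cube_sum:
  fixes u :: "'a \<Rightarrow> real"
  assumes fin: "finite L" and nonneg: "\<And>a. a \<in> L \<Longrightarrow> 0 \<le> u a"
  shows "(\<Sum>a\<in>L. (u a)^3) \<le> (\<Sum>a\<in>L. u a)^3"
proof -
  have "0 \<le> u a * ((\<Sum>b\<in>L. u b) - u a) * ((\<Sum>b\<in>L. u b) + u a)" if a: "a \<in> L" for a
  proof -
    have "u a \<le> (\<Sum>b\<in>L. u b)"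
      using fin nonneg a by (intro member_le_sum) auto
    then show ?thesis
      using nonneg[OF a] by (intro mult_nonneg_nonneg) auto
  qed
  then have "0 \<le> (\<Sum>a\<in>L. u a * ((\<Sum>b\<in>L. u b) - u a) * ((\<Sum>b\<in>L. u b) + u a))"
    by (intro sum_nonneg)
  then show ?thesis
    using cube_sum_minus_sum_cube_eq[of u L] by simp
qed

lemma cube_sum_minus_sum_cube_le:
  fixes u :: "'a \<Rightarrow> real" and e :: real
  assumes fin: "finite L" and e: "e \<ge> 0" and nonneg: "\<And>a. a \<in> L \<Longrightarrow> 0 \<le> u a"
    and pair: "\<And>a b. a \<in> L \<Longrightarrow> b \<in> L \<Longrightarrow> a \<noteq> b \<Longrightarrow> u a * u b \<le> e * (u a + u b)"
  shows "(\<Sum>a\<in>L. u a)^3 - (\<Sum>a\<in>L. (u a)^3) \<le> 4 * e * (real (card L))^2 * (\<Sum>a\<in>L. (u a)^2)"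
proof -
  define S where "S = (\<Sum>a\<in>L. u a)"
  define k where "k = real (card L)"
  have S: "S \<ge> 0"
    unfolding S_def using nonneg by (simp add: sum_nonneg)
  have others: "S - u a = (\<Sum>b\<in>L-{a}. u b)" if "a \<in> L" for a
    unfolding S_def using fin that by (simp add: sum_diff1)
  have "u a * (S - u a) * (S + u a) \<le> e * (k * u a + S) * (2 * S)" if a: "a \<in> L" for a
  proof -
    have "u a * (S - u a) \<le> e * (real (card (L - {a})) * u a + (S - u a))"
      unfolding others[OF a] using pair a by (intro mult_sum_le_of_pairwise) auto
    also have "\<dots> \<le> e * (k * u a + S)"
      using e nonneg[OF a] fin unfolding k_def
      by (intro mult_left_mono add_mono mult_right_mono) (auto simp: card_mono)
    finally have "u a * (S - u a) \<le> e * (k * u a + S)" .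
    moreover have "0 \<le> S - u a"
      unfolding others[OF a] using nonneg by (intro sum_nonneg) auto
    ultimately show ?thesis
      using nonneg[OF a] e S by (intro mult_mono[where c = "S + u a"]) (auto simp: k_def)
  qed
  then have "S^3 - (\<Sum>a\<in>L. (u a)^3) \<le> (\<Sum>a\<in>L. e * (k * u a + S) * (2 * S))"
    unfolding S_def cube_sum_minus_sum_cube_eq by (intro sum_mono) (simp add: S_def)
  also have "\<dots> = 4 * e * k * S^2"
    by (simp add: sum.distrib sum_distrib_left[symmetric] sum_distrib_right[symmetric]
        S_def[symmetric] k_def power2_eq_square algebra_simps)
  also have "\<dots> \<le> 4 * e * k * (k * (\<Sum>a\<in>L. (u a)^2))"
    unfolding S_def k_def using sum_squared_le_sum_of_squares[of u L] e
    by (intro mult_left_mono) (auto simp: mult.commute)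
  finally show ?thesis
    unfolding S_def k_def by (simp add: power2_eq_square algebra_simps)
qed

lemma sum_mult_square_sum_le:
  fixes u v :: "'a \<Rightarrow> real" and e :: real
  assumes e: "e \<ge> 0" and nonneg_u: "\<And>a. a \<in> A \<Longrightarrow> 0 \<le> u a" and nonneg_v: "\<And>b. b \<in> B \<Longrightarrow> 0 \<le> v b"
    and pair: "\<And>a b. a \<in> A \<Longrightarrow> b \<in> B \<Longrightarrow> u a * v b \<le> e * (u a + v b)"
  shows "(\<Sum>a\<in>A. u a) * (\<Sum>b\<in>B. v b)^2 \<le>
           e * (real (card A) + real (card B)) * (real (card A) * (\<Sum>a\<in>A. (u a)^2) + real (card B) * (\<Sum>b\<in>B. (v b)^2))"
proof -
  define V where "V = (\<Sum>a\<in>A. u a)"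
  define W where "W = (\<Sum>b\<in>B. v b)"
  define cA where "cA = real (card A)"
  define cB where "cB = real (card B)"
  have W: "W \<ge> 0"
    unfolding W_def using nonneg_v by (simp add: sum_nonneg)
  have "V * W = (\<Sum>a\<in>A. u a * W)"
    unfolding V_def by (simp add: sum_distrib_right)
  also have "\<dots> \<le> (\<Sum>a\<in>A. e * (cB * u a + W))"
    unfolding W_def cB_def using pair by (intro sum_mono mult_sum_le_of_pairwise) auto
  also have "\<dots> = e * (cB * V + cA * W)"
    unfolding cA_def V_def by (simp add: sum.distrib sum_distrib_left[symmetric] algebra_simps)
  finally have "V * W^2 \<le> e * (cB * V + cA * W) * W"
    using W by (simp add: power2_eq_square mult_right_mono mult.assoc[symmetric])
  also have "\<dots> = e * (cB * (V * W) + cA * W^2)"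
    by (simp add: algebra_simps power2_eq_square)
  also have "\<dots> \<le> e * (cA + cB) * (V^2 + W^2)"
  proof -
    have "2 * (V * W) \<le> V^2 + W^2"
      using sum_squares_bound[of V W] by (simp add: power2_eq_square)
    then have "cB * (V * W) + cA * W^2 \<le> (cA + cB) * (V^2 + W^2)"
      unfolding cA_def cB_def by (smt (verit) mult_left_mono of_nat_0_le_iff zero_le_power2 distrib_right
          mult_nonneg_nonneg)
    then show ?thesis
      using e by (simp add: mult.assoc mult_left_mono)
  qed
  also have "\<dots> \<le> e * (cA + cB) * (cA * (\<Sum>a\<in>A. (u a)^2) + cB * (\<Sum>b\<in>B. (v b)^2))"
    using sum_squared_le_sum_of_squares[of u A] sum_squared_le_sum_of_squares[of v B] e
    unfolding V_def W_def cA_def cB_def by (intro mult_left_mono add_mono) (auto simp: mult.commute)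
  finally show ?thesis
    unfolding V_def W_def cA_def cB_def .
qed

section \<open>L^(4/3) bounds for bubbles\<close>

lemma power2_powr: "(b::real) \<ge> 0 \<Longrightarrow> (b^2) powr a = b powr (2 * a)"
  by (simp add: powr_powr flip: powr_numeral)

lemma nn_Lp_integral_bubble_sq_le:
  "\<exists>M\<ge>0. \<forall>d>0. \<forall>c. nn_Lp_integral (4/3) (\<lambda>x. (bubble d c x)^2) \<le> ennreal (M * d powr (4/3))"
proof -
  define K where "K = 2 * 2 powr (2/3) / (2 * (2/3) - 1 :: real)"
  define M where "M = (2 * sqrt 2) powr (8/3) * K^4"
  have "\<forall>d>0. \<forall>c. nn_Lp_integral (4/3) (\<lambda>x. (bubble d c x)^2) \<le> ennreal (M * d powr (4/3))"
  proof (intro allI impI)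
    fix d :: real and c :: "real^4"
    assume d: "d > 0"
    have "nn_Lp_integral (4/3) (\<lambda>x. (bubble d c x)^2)
        = (\<integral>\<^sup>+x. ennreal ((2 * sqrt 2 * d) powr (8/3)) *
                   ennreal ((d^2 + (norm (x - c))^2) powr (- (DIM(real^4) * (2/3)))) \<partial>lborel)"
      unfolding nn_Lp_integral_def using bubble_pos[OF d]
      by (intro nn_integral_cong) (simp add: power2_powr less_imp_le bubble_powr_eq[OF d] flip: ennreal_mult)
    also have "\<dots> = ennreal ((2 * sqrt 2 * d) powr (8/3)) *
        (\<integral>\<^sup>+x. ennreal ((d^2 + (norm (x - c))^2) powr (- (DIM(real^4) * (2/3)))) \<partial>lborel)"
      by (rule nn_integral_cmult) measurable
    also have "\<dots> \<le> ennreal ((2 * sqrt 2 * d) powr (8/3)) * ennreal ((K * d powr (1 - 2 * (2/3))) ^ DIM(real^4))"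
      unfolding K_def using nn_integral_lorentzian_euclidean_le[OF d, of "2/3" c]
      by (intro mult_left_mono) auto
    also have "\<dots> = ennreal (M * d powr (4/3))"
    proof -
      have "d powr (8/3) * (d powr (1 - 2 * (2/3)))^4 = d powr (4/3)"
        using d by (simp add: powr_power flip: powr_add)
      then show ?thesis
        using d by (simp add: M_def powr_mult power_mult_distrib K_def flip: ennreal_mult)
    qed
    finally show "nn_Lp_integral (4/3) (\<lambda>x. (bubble d c x)^2) \<le> ennreal (M * d powr (4/3))" .
  qed
  moreover have "M \<ge> 0"
    unfolding M_def K_def by simp
  ultimately show ?thesis
    by (intro exI[of _ M] conjI)
qed

lemma norm_diff_lt_2_of_near:
  fixes x c :: "'a::real_normed_vector"
  assumes c: "norm c \<le> 1" and near: "(norm (x - c))^2 < (1 + (norm x)^2) / 4"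
  shows "norm (x - c) < 2"
proof (rule ccontr)
  assume "\<not> norm (x - c) < 2"
  then have m: "norm (x - c) \<ge> 2"
    by simp
  have "norm x \<le> 1 + norm (x - c)"
    using norm_triangle_ineq[of c "x - c"] c by simp
  then have "(norm x)^2 \<le> (1 + norm (x - c))^2"
    by (intro power_mono) auto
  moreover have "2 * norm (x - c) \<le> norm (x - c) * norm (x - c)"
    using m by (intro mult_right_mono) auto
  ultimately show False
    using near m by (simp add: power2_eq_square algebra_simps)
qed

lemma cube_powr_four_thirds: "0 \<le> u \<Longrightarrow> ((u::real) ^ 3) powr (4/3) = u ^ 4"
proof -
  assume u: "0 \<le> u"
  have "(u ^ 3) powr (4/3) = (u powr 3) powr (4/3)"
    using u by simp
  also have "\<dots> = u powr (3 * (4/3))"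
    by (rule powr_powr)
  also have "\<dots> = u ^ 4"
    using u by simp
  finally show ?thesis .
qed

lemma U_pow4: "U x ^ 4 = 64 * (1^2 + (norm (x - 0))^2) powr (- (DIM(real^4) * (1::real)))"
proof -
  have "(2 * sqrt 2) powr 4 = (64::real)"
    by (simp add: power_mult_distrib power_mult[of "sqrt 2" 2 2, simplified])
  then have "U x powr 4 = 64 * (1^2 + (norm (x - 0))^2) powr (- (DIM(real^4) * (1::real)))"
    unfolding U_eq_bubble bubble_powr_eq[of 1, simplified] by simp
  then show ?thesis
    using U_pos[of x] by simp
qed

lemma U_sq_bubble_le_far:
  assumes d: "d > 0" and far: "(1 + (norm x)^2) / 4 \<le> (norm (x - c))^2"
  shows "(U x)^2 * bubble d c x \<le> 4 * d * U x ^ 3"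
proof -
  have "bubble d c x \<le> 2 * sqrt 2 * d / ((1 + (norm x)^2) / 4)"
    using far by (intro bubble_le_of_dist[OF d]) (auto intro: add_pos_nonneg)
  also have "\<dots> = 4 * d * U x"
    unfolding U_def by (simp add: field_simps)
  finally have "bubble d c x \<le> 4 * d * U x" .
  then have "(U x)^2 * bubble d c x \<le> (U x)^2 * (4 * d * U x)"
    by (intro mult_left_mono) auto
  also have "\<dots> = 4 * d * U x ^ 3"
    by (simp add: power2_eq_square power3_eq_cube)
  finally show ?thesis .
qed

text \<open>Where the bubble centre is far compared with 1 + |x|, the bubble is O(d) U, and the decay of U^4 is
  integrable; near the centre U is bounded and the bubble alone is integrable on a ball.\<close>
lemma U_sq_bubble_powr_le:
  assumes d: "d > 0" and c: "norm c \<le> 1"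
  shows "((U x)^2 * bubble d c x) powr (4/3)
           \<le> 64 * (4 * d) powr (4/3) * (1^2 + (norm (x - 0))^2) powr (- (DIM(real^4) * (1::real)))
             + 8 powr (4/3) * (2 * sqrt 2 * d) powr (4/3) *
               ((d^2 + (norm (x - c))^2) powr (- (DIM(real^4) * (1/3))) * indicator (cball c 2) x)"
    (is "?lhs \<le> ?far + ?near")
proof -
  have U: "0 < U x" "U x \<le> 2 * sqrt 2" and w: "bubble d c x > 0"
    using U_pos U_le bubble_pos[OF d] by auto
  have "?far \<ge> 0" "?near \<ge> 0"
    using d by simp_all
  show ?thesis
  proof (cases "(1 + (norm x)^2) / 4 \<le> (norm (x - c))^2")
    case True
    have "?lhs \<le> (4 * d * U x ^ 3) powr (4/3)"
      using U_sq_bubble_le_far[OF d True] w by (intro powr_mono2) auto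
    also have "\<dots> = ?far"
      using U by (simp add: powr_mult cube_powr_four_thirds U_pow4 mult_ac)
    finally show ?thesis
      using \<open>?near \<ge> 0\<close> by linarith
  next
    case False
    then have "norm (x - c) < 2"
      using c by (intro norm_diff_lt_2_of_near) auto
    then have ind: "indicator (cball c 2) x = (1::real)"
      by (simp add: dist_norm norm_minus_commute)
    have "(U x)^2 \<le> 8"
      using power_mono[OF U(2), of 2] U by (simp add: power_mult_distrib)
    then have "?lhs \<le> (8 * bubble d c x) powr (4/3)"
      using U w by (intro powr_mono2 mult_right_mono) auto
    also have "\<dots> = ?near"
      unfolding ind using d by (simp add: powr_mult bubble_powr_eq)
    finally show ?thesis
      using \<open>?far \<ge> 0\<close> by linarith
  qed
qed

lemma nn_Lp_integral_U_sq_bubble_le: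
  "\<exists>M\<ge>0. \<forall>d c. 0 < d \<longrightarrow> d \<le> 1 \<longrightarrow> norm c \<le> 1 \<longrightarrow>
     nn_Lp_integral (4/3) (\<lambda>x. (U x)^2 * bubble d c x) \<le> ennreal (M * d powr (4/3))"
proof -
  define K1 :: real where "K1 = 2 * 2 powr 1 / (2 * 1 - 1) * 1 powr (1 - 2 * 1)"
  define K2 :: real where "K2 = 2 * 2 powr (1/3) / (1 - 2 * (1/3)) * (1 + 2) powr (1 - 2 * (1/3))"
  define A :: real where "A = 64 * 4 powr (4/3)"
  define B :: real where "B = 8 powr (4/3) * (2 * sqrt 2) powr (4/3)"
  define M where "M = A * K1^4 + B * K2^4"
  have "nn_Lp_integral (4/3) (\<lambda>x. (U x)^2 * bubble d c x) \<le> ennreal (M * d powr (4/3))"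
    if d: "0 < d" "d \<le> 1" and c: "norm c \<le> 1" for d c
  proof -
    let ?far = "\<lambda>x::real^4. (1^2 + (norm (x - 0))^2) powr (- (DIM(real^4) * (1::real)))"
    let ?near = "\<lambda>x. (d^2 + (norm (x - c))^2) powr (- (DIM(real^4) * (1/3))) * indicator (cball c 2) x"
    have "64 * (4 * d) powr (4/3) = A * d powr (4/3)"
      "8 powr (4/3) * (2 * sqrt 2 * d) powr (4/3) = B * d powr (4/3)"
      unfolding A_def B_def using d by (simp_all add: powr_mult)
    then have "\<bar>(U x)^2 * bubble d c x\<bar> powr (4/3) \<le> A * d powr (4/3) * ?far x + B * d powr (4/3) * ?near x" for x
      using U_sq_bubble_powr_le[OF d(1) c, of x] bubble_pos[OF d(1), of c x] by simp
    then have "nn_Lp_integral (4/3) (\<lambda>x. (U x)^2 * bubble d c x)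
        \<le> (\<integral>\<^sup>+x. ennreal (A * d powr (4/3) * ?far x + B * d powr (4/3) * ?near x) \<partial>lborel)"
      unfolding nn_Lp_integral_def by (intro nn_integral_mono ennreal_leI)
    also have "\<dots> \<le> ennreal (A * d powr (4/3) * K1 ^ DIM(real^4) + B * d powr (4/3) * K2 ^ DIM(real^4))"
      unfolding K1_def K2_def A_def B_def
      using nn_integral_lorentzian_euclidean_le[of 1 1 "0::real^4"] nn_integral_lorentzian_cball_le[OF d, of "1/3" 2 c]
      by (intro nn_integral_linear_le) auto
    also have "\<dots> = ennreal (M * d powr (4/3))"
    proof -
      have "A * d powr (4/3) * K1 ^ 4 + B * d powr (4/3) * K2 ^ 4 = M * d powr (4/3)"
        unfolding M_def by (simp add: algebra_simps)
      then show ?thesis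
        by simp
    qed
    finally show ?thesis .
  qed
  moreover have "M \<ge> 0"
    unfolding M_def A_def B_def K1_def K2_def by simp
  ultimately show ?thesis
    by blast
qed

section \<open>The two error terms\<close>

definition coupling_term :: "nat \<Rightarrow> nat \<Rightarrow> real \<Rightarrow> real \<Rightarrow> real^4 \<Rightarrow> real" where
  "coupling_term q k \<beta> \<delta> x = \<beta> * U x * (\<Sum>r=1..q. (V_r q k \<delta> r x)^2)"

definition residual :: "nat \<Rightarrow> nat \<Rightarrow> real \<Rightarrow> real \<Rightarrow> real \<Rightarrow> real^4 \<Rightarrow> real" where
  "residual q k \<alpha> \<beta> \<delta> x = laplacian (V_tilde k \<delta>) x + (V_tilde k \<delta> x)^3 + \<beta> * (U x)^2 * V_tilde k \<delta> x
                            + \<alpha> * V_tilde k \<delta> x * (\<Sum>r=2..q. (V_r q k \<delta> r x)^2)"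

lemma V_r_sq_le:
  assumes "d > 0"
  shows "(V_r q k d r x)^2 \<le> real k * (\<Sum>l=1..k. (bubble d (V_r_centre q k d r l) x)^2)"
  unfolding V_r_eq_sum_bubble[OF assms]
  using sum_squared_le_sum_of_squares[of "\<lambda>l. bubble d (V_r_centre q k d r l) x" "{1..k}"]
  by (simp add: mult.commute)

lemma sum_V_r_sq_le:
  assumes "d > 0"
  shows "(\<Sum>r\<in>R. (V_r q k d r x)^2)
           \<le> real k * (\<Sum>p\<in>R \<times> {1..k}. (bubble d (V_r_centre q k d (fst p) (snd p)) x)^2)"
proof -
  have "(\<Sum>r\<in>R. (V_r q k d r x)^2) \<le> (\<Sum>r\<in>R. real k * (\<Sum>l=1..k. (bubble d (V_r_centre q k d r l) x)^2))"
    using V_r_sq_le[OF assms] by (intro sum_mono)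
  then show ?thesis
    by (simp add: sum_distrib_left sum.cartesian_product case_prod_beta)
qed

lemma abs_coupling_term_le:
  assumes "d > 0"
  shows "\<bar>coupling_term q k \<beta> d x\<bar>
           \<le> 2 * sqrt 2 * real k * \<bar>\<beta>\<bar> * (\<Sum>p\<in>{1..q} \<times> {1..k}. (bubble d (V_r_centre q k d (fst p) (snd p)) x)^2)"
proof -
  have "\<bar>coupling_term q k \<beta> d x\<bar> = \<bar>\<beta>\<bar> * U x * (\<Sum>r=1..q. (V_r q k d r x)^2)"
    unfolding coupling_term_def using U_pos[of x] by (simp add: abs_mult sum_nonneg)
  also have "\<dots> \<le> \<bar>\<beta>\<bar> * (2 * sqrt 2) * (real k * (\<Sum>p\<in>{1..q} \<times> {1..k}. (bubble d (V_r_centre q k d (fst p) (snd p)) x)^2))"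
    using U_le[of x] sum_V_r_sq_le[OF assms, where R = "{1..q}" and q = q and k = k and x = x]
    by (intro mult_mono mult_left_mono) (auto simp: sum_nonneg)
  finally show ?thesis
    by (simp add: mult_ac)
qed

lemma borel_measurable_coupling_term:
  assumes "d > 0"
  shows "coupling_term q k \<beta> d \<in> borel_measurable borel"
  unfolding coupling_term_def V_r_eq_sum_bubble[OF assms] by measurable

lemma coupling_term_estimate:
  "\<exists>C. \<forall>\<beta> d. 0 < d \<longrightarrow>
     in_Lp (4/3) (coupling_term q k \<beta> d) \<and> Lp_norm (4/3) (coupling_term q k \<beta> d) \<le> C * \<bar>\<beta>\<bar> * d"
proof -
  obtain M where M: "M \<ge> 0"
    and bubble_sq: "\<And>d c. d > 0 \<Longrightarrow> nn_Lp_integral (4/3) (\<lambda>x. (bubble d c x)^2) \<le> ennreal (M * d powr (4/3))"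
    using nn_Lp_integral_bubble_sq_le by blast
  define N where "N = real (card ({1..q} \<times> {1..k}))"
  define X where "X = N powr (4/3) * (N * M)"
  have X: "X \<ge> 0"
    unfolding X_def N_def using M by simp
  have "in_Lp (4/3) (coupling_term q k \<beta> d) \<and>
        Lp_norm (4/3) (coupling_term q k \<beta> d) \<le> X powr (1 / (4/3)) * (2 * sqrt 2 * real k * \<bar>\<beta>\<bar> * d)"
    if d: "d > 0" for \<beta> d
  proof (rule in_Lp_Lp_norm_le_of_dominated[OF borel_measurable_coupling_term[OF d] _ abs_coupling_term_le[OF d]])
    have "nn_Lp_integral (4/3) (\<lambda>x. \<Sum>p\<in>{1..q} \<times> {1..k}. (bubble d (V_r_centre q k d (fst p) (snd p)) x)^2)
        \<le> ennreal (N powr (4/3) * (N * (M * d powr (4/3))))"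
      unfolding N_def using bubble_sq[OF d] M by (intro nn_Lp_integral_sum_le) auto
    then show "nn_Lp_integral (4/3) (\<lambda>x. \<Sum>p\<in>{1..q} \<times> {1..k}. (bubble d (V_r_centre q k d (fst p) (snd p)) x)^2)
        \<le> ennreal (X * d powr (4/3))"
      by (simp add: X_def mult_ac)
  qed (use d X in auto)
  then show ?thesis
    by (intro exI[of _ "X powr (3/4) * (2 * sqrt 2 * real k)"]) (simp add: mult_ac)
qed

lemma laplacian_V_tilde:
  assumes "d > 0"
  shows "laplacian (V_tilde k d) x = - (\<Sum>l=1..k. (bubble d (xi_tilde k d l) x)^3)"
  unfolding V_tilde_eq_sum_bubble[OF assms] by (rule laplacian_sum_bubble[OF assms])

lemma borel_measurable_residual:
  assumes "d > 0"
  shows "residual q k \<alpha> \<beta> d \<in> borel_measurable borel"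
proof -
  have "residual q k \<alpha> \<beta> d = (\<lambda>x. - (\<Sum>l=1..k. (bubble d (xi_tilde k d l) x)^3) + (V_tilde k d x)^3
          + \<beta> * (U x)^2 * V_tilde k d x + \<alpha> * V_tilde k d x * (\<Sum>r=2..q. (V_r q k d r x)^2))"
    unfolding residual_def laplacian_V_tilde[OF assms] ..
  then show ?thesis
    unfolding V_tilde_eq_sum_bubble[OF assms] V_r_eq_sum_bubble[OF assms] by simp
qed

lemma laplacian_V_tilde_add_cube_bounds:
  assumes d: "d > 0" and \<sigma>: "\<sigma> > 0" and e: "8 * sqrt 2 * d / \<sigma>^2 \<le> e"
    and sep: "\<And>a b. a \<in> {1..k} \<Longrightarrow> b \<in> {1..k} \<Longrightarrow> a \<noteq> b \<Longrightarrow> \<sigma> \<le> norm (xi_tilde k d a - xi_tilde k d b)"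
  shows "0 \<le> laplacian (V_tilde k d) x + (V_tilde k d x)^3"
    and "laplacian (V_tilde k d) x + (V_tilde k d x)^3 \<le> 4 * e * (real k)^2 * (\<Sum>l=1..k. (bubble d (xi_tilde k d l) x)^2)"
proof -
  have eq: "laplacian (V_tilde k d) x + (V_tilde k d x)^3
      = (\<Sum>l=1..k. bubble d (xi_tilde k d l) x)^3 - (\<Sum>l=1..k. (bubble d (xi_tilde k d l) x)^3)"
    unfolding laplacian_V_tilde[OF d] by (simp add: V_tilde_eq_sum_bubble[OF d])
  show "0 \<le> laplacian (V_tilde k d) x + (V_tilde k d x)^3"
    unfolding eq using bubble_pos[OF d] by (simp add: sum_cube_le_cube_sum less_imp_le)
  have "0 \<le> e"
    by (rule order_trans[OF _ e]) (use d in simp)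
  then show "laplacian (V_tilde k d) x + (V_tilde k d x)^3 \<le> 4 * e * (real k)^2 * (\<Sum>l=1..k. (bubble d (xi_tilde k d l) x)^2)"
    unfolding eq using bubble_pos[OF d] bubble_mult_le_of_separated[OF d \<sigma> sep e]
    using cube_sum_minus_sum_cube_le[of "{1..k}" e "\<lambda>l. bubble d (xi_tilde k d l) x"]
    by (simp add: less_imp_le)
qed

lemma V_tilde_mult_V_r_sq_le:
  assumes d: "d > 0" and \<sigma>: "\<sigma> > 0" and e: "8 * sqrt 2 * d / \<sigma>^2 \<le> e"
    and sep: "\<And>a l. a \<in> {1..k} \<Longrightarrow> l \<in> {1..k} \<Longrightarrow> \<sigma> \<le> norm (xi_tilde k d a - V_r_centre q k d r l)"
  shows "V_tilde k d x * (V_r q k d r x)^2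
           \<le> 2 * e * (real k)^2 *
             ((\<Sum>l=1..k. (bubble d (xi_tilde k d l) x)^2) + (\<Sum>l=1..k. (bubble d (V_r_centre q k d r l) x)^2))"
proof -
  have "0 \<le> e"
    by (rule order_trans[OF _ e]) (use d in simp)
  then have "V_tilde k d x * (V_r q k d r x)^2
      \<le> e * (real k + real k) *
        (real k * (\<Sum>l=1..k. (bubble d (xi_tilde k d l) x)^2) + real k * (\<Sum>l=1..k. (bubble d (V_r_centre q k d r l) x)^2))"
    unfolding V_tilde_eq_sum_bubble[OF d] V_r_eq_sum_bubble[OF d]
    using bubble_pos[OF d] bubble_mult_le_of_separated[OF d \<sigma> sep e]
    using sum_mult_square_sum_le[of e "{1..k}" "\<lambda>l. bubble d (xi_tilde k d l) x"
        "{1..k}" "\<lambda>l. bubble d (V_r_centre q k d r l) x"]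
    by (simp add: less_imp_le)
  then show ?thesis
    by (simp add: algebra_simps power2_eq_square)
qed

lemma V_tilde_mult_sum_V_r_sq_le:
  assumes d: "d > 0" and \<sigma>: "\<sigma> > 0" and e: "8 * sqrt 2 * d / \<sigma>^2 \<le> e"
    and sep: "\<And>r a l. r \<in> {2..q} \<Longrightarrow> a \<in> {1..k} \<Longrightarrow> l \<in> {1..k} \<Longrightarrow>
                \<sigma> \<le> norm (xi_tilde k d a - V_r_centre q k d r l)"
  shows "V_tilde k d x * (\<Sum>r=2..q. (V_r q k d r x)^2)
           \<le> 2 * e * (real k)^2 *
             (real q * (\<Sum>l=1..k. (bubble d (xi_tilde k d l) x)^2)
              + (\<Sum>p\<in>{2..q} \<times> {1..k}. (bubble d (V_r_centre q k d (fst p) (snd p)) x)^2))"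
proof -
  define E where "E = 2 * e * (real k)^2"
  define A where "A = (\<Sum>l=1..k. (bubble d (xi_tilde k d l) x)^2)"
  have "0 \<le> e"
    by (rule order_trans[OF _ e]) (use d in simp)
  then have E: "E \<ge> 0" and A: "A \<ge> 0"
    unfolding E_def A_def by (simp_all add: sum_nonneg)
  have "V_tilde k d x * (\<Sum>r=2..q. (V_r q k d r x)^2) = (\<Sum>r=2..q. V_tilde k d x * (V_r q k d r x)^2)"
    by (simp add: sum_distrib_left)
  also have "\<dots> \<le> (\<Sum>r=2..q. E * (A + (\<Sum>l=1..k. (bubble d (V_r_centre q k d r l) x)^2)))"
    unfolding E_def A_def using V_tilde_mult_V_r_sq_le[OF d \<sigma> e] sep by (intro sum_mono) simp
  also have "\<dots> = E * (real (card {2..q}) * A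
                    + (\<Sum>p\<in>{2..q} \<times> {1..k}. (bubble d (V_r_centre q k d (fst p) (snd p)) x)^2))"
    by (simp add: sum.distrib sum_distrib_left[symmetric] sum.cartesian_product case_prod_beta)
  also have "\<dots> \<le> E * (real q * A + (\<Sum>p\<in>{2..q} \<times> {1..k}. (bubble d (V_r_centre q k d (fst p) (snd p)) x)^2))"
    using E A by (intro mult_left_mono add_right_mono mult_right_mono) auto
  finally show ?thesis
    unfolding E_def A_def .
qed

lemma abs_residual_le:
  assumes d: "d > 0" "d \<le> 2 * \<bar>\<beta>\<bar>" and \<sigma>: "\<sigma> > 0"
    and sep_xi: "\<And>a b. a \<in> {1..k} \<Longrightarrow> b \<in> {1..k} \<Longrightarrow> a \<noteq> b \<Longrightarrow> \<sigma> \<le> norm (xi_tilde k d a - xi_tilde k d b)"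
    and sep_V_r: "\<And>r a l. r \<in> {2..q} \<Longrightarrow> a \<in> {1..k} \<Longrightarrow> l \<in> {1..k} \<Longrightarrow>
                    \<sigma> \<le> norm (xi_tilde k d a - V_r_centre q k d r l)"
  shows "\<bar>residual q k \<alpha> \<beta> d x\<bar> \<le> \<bar>\<beta>\<bar> * (16 * sqrt 2 / \<sigma>^2 * (4 + 2 * \<bar>\<alpha>\<bar> * (real q + 1)) * (real k)^2 + 1) *
           ((\<Sum>l=1..k. (bubble d (xi_tilde k d l) x)^2) + (\<Sum>l=1..k. (U x)^2 * bubble d (xi_tilde k d l) x)
            + (\<Sum>p\<in>{2..q} \<times> {1..k}. (bubble d (V_r_centre q k d (fst p) (snd p)) x)^2))"
proof -
  define E where "E = 16 * sqrt 2 / \<sigma>^2"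
  define A where "A = (\<Sum>l=1..k. (bubble d (xi_tilde k d l) x)^2)"
  define B where "B = (\<Sum>l=1..k. (U x)^2 * bubble d (xi_tilde k d l) x)"
  define C where "C = (\<Sum>p\<in>{2..q} \<times> {1..k}. (bubble d (V_r_centre q k d (fst p) (snd p)) x)^2)"
  define P where "P = laplacian (V_tilde k d) x + (V_tilde k d x)^3"
  define S where "S = V_tilde k d x * (\<Sum>r=2..q. (V_r q k d r x)^2)"
  have nonneg: "E \<ge> 0" "A \<ge> 0" "B \<ge> 0" "C \<ge> 0"
    unfolding E_def A_def B_def C_def using bubble_pos[OF d(1)] by (auto intro!: sum_nonneg mult_nonneg_nonneg intro: less_imp_le)
  have e: "8 * sqrt 2 * d / \<sigma>^2 \<le> E * \<bar>\<beta>\<bar>"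
    unfolding E_def using d \<sigma> by (simp add: field_simps)
  have P: "0 \<le> P" "P \<le> 4 * (E * \<bar>\<beta>\<bar>) * (real k)^2 * A"
    unfolding P_def A_def using laplacian_V_tilde_add_cube_bounds[OF d(1) \<sigma> e sep_xi] by auto
  have S: "0 \<le> S"
    unfolding S_def V_tilde_eq_sum_bubble[OF d(1)] using bubble_pos[OF d(1)]
    by (auto intro!: mult_nonneg_nonneg sum_nonneg intro: less_imp_le)
  have S': "S \<le> 2 * (E * \<bar>\<beta>\<bar>) * (real k)^2 * (real q * A + C)"
    unfolding S_def A_def C_def by (rule V_tilde_mult_sum_V_r_sq_le[OF d(1) \<sigma> e sep_V_r])
  have "(U x)^2 * V_tilde k d x = B"
    unfolding B_def V_tilde_eq_sum_bubble[OF d(1)] by (simp add: sum_distrib_left)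
  then have "residual q k \<alpha> \<beta> d x = P + \<beta> * B + \<alpha> * S"
    unfolding residual_def P_def S_def by (simp add: mult.assoc)
  then have "\<bar>residual q k \<alpha> \<beta> d x\<bar> \<le> \<bar>P\<bar> + \<bar>\<beta> * B\<bar> + \<bar>\<alpha> * S\<bar>"
    using abs_triangle_ineq[of "P + \<beta> * B" "\<alpha> * S"] abs_triangle_ineq[of P "\<beta> * B"] by linarith
  also have "\<dots> = P + \<bar>\<beta>\<bar> * B + \<bar>\<alpha>\<bar> * S"
    using P S nonneg by (simp add: abs_mult)
  also have "\<dots> \<le> 4 * (E * \<bar>\<beta>\<bar>) * (real k)^2 * A + \<bar>\<beta>\<bar> * B
                  + \<bar>\<alpha>\<bar> * (2 * (E * \<bar>\<beta>\<bar>) * (real k)^2 * (real q * A + C))"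
    using P S' by (intro add_mono mult_left_mono) auto
  also have "\<dots> \<le> \<bar>\<beta>\<bar> * (E * (4 + 2 * \<bar>\<alpha>\<bar> * (real q + 1)) * (real k)^2 + 1) * (A + B + C)"
  proof -
    have "0 \<le> \<bar>\<beta>\<bar> * ((2 * \<bar>\<alpha>\<bar> * E * (real k)^2 + 1) * A + E * (4 + 2 * \<bar>\<alpha>\<bar> * (real q + 1)) * (real k)^2 * B
                    + (E * (4 + 2 * \<bar>\<alpha>\<bar> * real q) * (real k)^2 + 1) * C)"
      using nonneg by (intro mult_nonneg_nonneg add_nonneg_nonneg) auto
    then show ?thesis
      by (simp add: algebra_simps)
  qed
  finally show ?thesis
    unfolding E_def A_def B_def C_def .
qed

lemma nn_Lp_integral_residual_majorant_le:
  "\<exists>X\<ge>0. \<forall>d. 0 < d \<longrightarrow> d \<le> 1 \<longrightarrow>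
     nn_Lp_integral (4/3) (\<lambda>x. (\<Sum>l=1..k. (bubble d (xi_tilde k d l) x)^2)
                               + (\<Sum>l=1..k. (U x)^2 * bubble d (xi_tilde k d l) x)
                               + (\<Sum>p\<in>{2..q} \<times> {1..k}. (bubble d (V_r_centre q k d (fst p) (snd p)) x)^2))
       \<le> ennreal (X * d powr (4/3))"
proof -
  obtain M1 where M1: "M1 \<ge> 0"
    and bubble_sq: "\<And>d c. d > 0 \<Longrightarrow> nn_Lp_integral (4/3) (\<lambda>x. (bubble d c x)^2) \<le> ennreal (M1 * d powr (4/3))"
    using nn_Lp_integral_bubble_sq_le by blast
  obtain M2 where M2: "M2 \<ge> 0"
    and U_sq_bubble: "\<And>d c. 0 < d \<Longrightarrow> d \<le> 1 \<Longrightarrow> norm c \<le> 1 \<Longrightarrow>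
                        nn_Lp_integral (4/3) (\<lambda>x. (U x)^2 * bubble d c x) \<le> ennreal (M2 * d powr (4/3))"
    using nn_Lp_integral_U_sq_bubble_le by blast
  define K where "K = real (card {1..k})"
  define N where "N = real (card ({2..q} \<times> {1..k}))"
  define X where "X = 2 powr (4/3) * (2 powr (4/3) * (K powr (4/3) * K * M1 + K powr (4/3) * K * M2) + N powr (4/3) * N * M1)"
  have "nn_Lp_integral (4/3) (\<lambda>x. (\<Sum>l=1..k. (bubble d (xi_tilde k d l) x)^2)
                               + (\<Sum>l=1..k. (U x)^2 * bubble d (xi_tilde k d l) x)
                               + (\<Sum>p\<in>{2..q} \<times> {1..k}. (bubble d (V_r_centre q k d (fst p) (snd p)) x)^2))
       \<le> ennreal (X * d powr (4/3))" if d: "0 < d" "d \<le> 1" for d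
  proof -
    have "nn_Lp_integral (4/3) (\<lambda>x. \<Sum>l=1..k. (bubble d (xi_tilde k d l) x)^2)
        \<le> ennreal (K powr (4/3) * (K * (M1 * d powr (4/3))))"
      unfolding K_def using bubble_sq[OF d(1)] M1 by (intro nn_Lp_integral_sum_le) auto
    moreover have "nn_Lp_integral (4/3) (\<lambda>x. \<Sum>l=1..k. (U x)^2 * bubble d (xi_tilde k d l) x)
        \<le> ennreal (K powr (4/3) * (K * (M2 * d powr (4/3))))"
      unfolding K_def using U_sq_bubble[OF d] norm_xi_tilde_le[of d] M2 d by (intro nn_Lp_integral_sum_le) auto
    moreover have "nn_Lp_integral (4/3) (\<lambda>x. \<Sum>p\<in>{2..q} \<times> {1..k}. (bubble d (V_r_centre q k d (fst p) (snd p)) x)^2)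
        \<le> ennreal (N powr (4/3) * (N * (M1 * d powr (4/3))))"
      unfolding N_def using bubble_sq[OF d(1)] M1 by (intro nn_Lp_integral_sum_le) auto
    ultimately have "nn_Lp_integral (4/3) (\<lambda>x. (\<Sum>l=1..k. (bubble d (xi_tilde k d l) x)^2)
                               + (\<Sum>l=1..k. (U x)^2 * bubble d (xi_tilde k d l) x)
                               + (\<Sum>p\<in>{2..q} \<times> {1..k}. (bubble d (V_r_centre q k d (fst p) (snd p)) x)^2))
        \<le> ennreal (2 powr (4/3) * (2 powr (4/3) * (K powr (4/3) * (K * (M1 * d powr (4/3)))
              + K powr (4/3) * (K * (M2 * d powr (4/3)))) + N powr (4/3) * (N * (M1 * d powr (4/3)))))"
      using M1 M2 unfolding K_def N_def by (intro nn_Lp_integral_add_le) auto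
    also have "\<dots> = ennreal (X * d powr (4/3))"
      unfolding X_def by (simp add: algebra_simps)
    finally show ?thesis .
  qed
  moreover have "X \<ge> 0"
    unfolding X_def K_def N_def using M1 M2 by simp
  ultimately show ?thesis
    by (intro exI[of _ X] conjI allI impI)
qed

lemma residual_estimate:
  "\<exists>C. \<forall>\<beta> d. 0 < d \<longrightarrow> d \<le> 1/2 \<longrightarrow> d \<le> 2 * \<bar>\<beta>\<bar> \<longrightarrow>
     in_Lp (4/3) (residual q k \<alpha> \<beta> d) \<and> Lp_norm (4/3) (residual q k \<alpha> \<beta> d) \<le> C * \<bar>\<beta>\<bar> * d"
proof -
  obtain \<sigma> where \<sigma>: "\<sigma> > 0"
    and sep_xi: "\<And>d a b. 0 \<le> d \<Longrightarrow> d \<le> 1/2 \<Longrightarrow> a \<in> {1..k} \<Longrightarrow> b \<in> {1..k} \<Longrightarrow> a \<noteq> b \<Longrightarrow>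
                   \<sigma> \<le> norm (xi_tilde k d a - xi_tilde k d b)"
    and sep_V_r: "\<And>d r a l. 0 \<le> d \<Longrightarrow> d \<le> 1/2 \<Longrightarrow> r \<in> {2..q} \<Longrightarrow> a \<in> {1..k} \<Longrightarrow> l \<in> {1..k} \<Longrightarrow>
                   \<sigma> \<le> norm (xi_tilde k d a - V_r_centre q k d r l)"
    using centres_separated by blast
  obtain X where X: "X \<ge> 0"
    and majorant: "\<And>d. 0 < d \<Longrightarrow> d \<le> 1 \<Longrightarrow>
      nn_Lp_integral (4/3) (\<lambda>x. (\<Sum>l=1..k. (bubble d (xi_tilde k d l) x)^2)
                               + (\<Sum>l=1..k. (U x)^2 * bubble d (xi_tilde k d l) x)
                               + (\<Sum>p\<in>{2..q} \<times> {1..k}. (bubble d (V_r_centre q k d (fst p) (snd p)) x)^2))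
        \<le> ennreal (X * d powr (4/3))"
    using nn_Lp_integral_residual_majorant_le by blast
  define W where "W = 16 * sqrt 2 / \<sigma>^2 * (4 + 2 * \<bar>\<alpha>\<bar> * (real q + 1)) * (real k)^2 + 1"
  have W: "W \<ge> 0"
    unfolding W_def by simp
  have "in_Lp (4/3) (residual q k \<alpha> \<beta> d) \<and>
        Lp_norm (4/3) (residual q k \<alpha> \<beta> d) \<le> X powr (1 / (4/3)) * (\<bar>\<beta>\<bar> * W * d)"
    if d: "0 < d" "d \<le> 1/2" "d \<le> 2 * \<bar>\<beta>\<bar>" for \<beta> d
  proof (rule in_Lp_Lp_norm_le_of_dominated[OF borel_measurable_residual[OF d(1)] _ _ _ majorant])
    show "\<bar>residual q k \<alpha> \<beta> d x\<bar> \<le> \<bar>\<beta>\<bar> * W *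
          ((\<Sum>l=1..k. (bubble d (xi_tilde k d l) x)^2) + (\<Sum>l=1..k. (U x)^2 * bubble d (xi_tilde k d l) x)
           + (\<Sum>p\<in>{2..q} \<times> {1..k}. (bubble d (V_r_centre q k d (fst p) (snd p)) x)^2))" for x
      unfolding W_def using d by (intro abs_residual_le \<sigma> sep_xi sep_V_r) auto
  qed (use d X W in \<open>auto intro!: borel_measurable_add borel_measurable_sum\<close>)
  then show ?thesis
    by (intro exI[of _ "X powr (3/4) * W"]) (simp add: mult_ac)
qed

lemma delta_le_of_exp_bound:
  fixes \<beta> \<delta> :: real
  assumes \<beta>: "\<beta> < 0" and \<delta>: "\<delta> < exp (- 1 / sqrt \<bar>\<beta>\<bar>)"
  shows "\<delta> \<le> 2 * \<bar>\<beta>\<bar>"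
proof -
  define y where "y = 1 / sqrt \<bar>\<beta>\<bar>"
  have y: "y > 0"
    unfolding y_def using \<beta> by simp
  have "y^2 / 2 \<le> exp y"
    using exp_lower_Taylor_quadratic[of y] y by simp
  then have "1 / exp y \<le> 1 / (y^2 / 2)"
    using y by (intro divide_left_mono) auto
  also have "1 / (y^2 / 2) = 2 * \<bar>\<beta>\<bar>"
    unfolding y_def using \<beta> by (simp add: power_divide)
  finally show ?thesis
    using \<delta> unfolding y_def by (simp add: exp_minus divide_inverse)
qed

theorem proposition3p2:
  fixes q k :: nat and \<alpha> :: real
  assumes "q \<ge> 2" and "k \<ge> 2"
  shows "\<exists>\<beta>0 < 0. \<exists>C. \<forall>\<beta> \<delta>.
     \<beta>0 \<le> \<beta> \<and> \<beta> < 0 \<and> 0 < \<delta> \<and> \<delta> < exp (- 1 / sqrt \<bar>\<beta>\<bar>) \<longrightarrow>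
     (let F1 = (\<lambda>x. \<beta> * U x * (\<Sum>r=1..q. (V_r q k \<delta> r x)^2));
          F2 = (\<lambda>x. laplacian (V_tilde k \<delta>) x + (V_tilde k \<delta> x)^3
                    + \<beta> * (U x)^2 * V_tilde k \<delta> x
                    + \<alpha> * V_tilde k \<delta> x * (\<Sum>r=2..q. (V_r q k \<delta> r x)^2))
      in in_Lp (4/3) F1 \<and> in_Lp (4/3) F2 \<and>
         Lp_norm (4/3) F1 + Lp_norm (4/3) F2 \<le> C * \<bar>\<beta>\<bar> * \<delta>)"
proof -
  obtain C1 where C1: "\<And>\<beta> d. 0 < d \<Longrightarrow>
      in_Lp (4/3) (coupling_term q k \<beta> d) \<and> Lp_norm (4/3) (coupling_term q k \<beta> d) \<le> C1 * \<bar>\<beta>\<bar> * d"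
    using coupling_term_estimate by blast
  obtain C2 where C2: "\<And>\<beta> d. 0 < d \<Longrightarrow> d \<le> 1/2 \<Longrightarrow> d \<le> 2 * \<bar>\<beta>\<bar> \<Longrightarrow>
      in_Lp (4/3) (residual q k \<alpha> \<beta> d) \<and> Lp_norm (4/3) (residual q k \<alpha> \<beta> d) \<le> C2 * \<bar>\<beta>\<bar> * d"
    using residual_estimate by blast
  have "in_Lp (4/3) (coupling_term q k \<beta> \<delta>) \<and> in_Lp (4/3) (residual q k \<alpha> \<beta> \<delta>) \<and>
        Lp_norm (4/3) (coupling_term q k \<beta> \<delta>) + Lp_norm (4/3) (residual q k \<alpha> \<beta> \<delta>) \<le> (C1 + C2) * \<bar>\<beta>\<bar> * \<delta>"
    if \<beta>: "-1/4 \<le> \<beta>" "\<beta> < 0" and \<delta>: "0 < \<delta>" "\<delta> < exp (- 1 / sqrt \<bar>\<beta>\<bar>)" for \<beta> \<delta>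
  proof -
    have "\<delta> \<le> 2 * \<bar>\<beta>\<bar>"
      using delta_le_of_exp_bound[OF \<beta>(2) \<delta>(2)] .
    moreover have "2 * \<bar>\<beta>\<bar> \<le> 1/2"
      using \<beta> by simp
    ultimately show ?thesis
      using C1[OF \<delta>(1), of \<beta>] C2[OF \<delta>(1), of \<beta>] by (simp add: distrib_right)
  qed
  then show ?thesis
    unfolding Let_def coupling_term_def[abs_def] residual_def[abs_def]
    by (intro exI[of _ "-1/4"] conjI exI[of _ "C1 + C2"] allI impI) auto
qed

end
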